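(* Let $\tau$, $K$, $X$, $Q$, $\mu_0$, $f$, $\omega$, $Z_{N,\beta,h,\omega}$, $A(b,\beta,h)$ and $\lambda(b,\beta,h)$ be as in the context. Then for all $h\in\mathbb{R}$ and $\beta\ge 0$, $$\frac1N\log \mathbb{E}Z_{N,\beta,h,\omega}\xrightarrow[N\to\infty]{} F^a(\beta,h)\ge 0,$$ where $F^a(\beta,h)$ is the (unique) solution $b>0$ of the equation $\lambda(b,\beta,h)=1$ if $\lambda(0,\beta,h)>1$, and $F^a(\beta,h)=0$ otherwise. Moreover the annealed critical point is $$h_c^a(\beta):=\sup\{h\in\mathbb{R}: F^a(\beta,h)=0\}=-\log\lambda(0,\beta,0).$$
   Context: Let $\tau=(\tau_n)_{n\ge0}$ be a discrete renewal process on $\{0,1,2,\dots\}$ with $\tau_0=0$ and i.i.d. interarrival times with law $K(n):=P(\tau_1=n)=L(n)n^{-(1+\alpha)}$ for $n\ge1$, where $\alpha\ge0$ and $L:\mathbb{N}\to(0,\infty)$ is slowly varying; assume $\sum_{n\ge1}K(n)=1$. Write $\delta_n=\mathbf 1_{\{n\in\tau\}}$ where $\{n\in\tau\}=\bigcup_{k\ge0}\{\tau_k=n\}$, and $E$ for expectation w.r.t. the law $P$ of $\tau$. For a real sequence $\omega=(\omega_n)_{n\ge0}$ independent of $\tau$, $\beta\ge0$, $h\in\mathbb{R}$, define the partition function $Z_{N,\beta,h,\omega}=E\big[\exp\big(\sum_{n=1}^N(\beta\omega_n+h)\delta_n\big)\delta_N\big]$. Let $X=(X_n)_{n\ge0}$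 be a homogeneous irreducible Markov chain on a finite state space $\Sigma$ with transition matrix $Q$, started from its invariant distribution $\mu_0$; let $f:\Sigma\to\mathbb{R}$ with $\sum_x\mu_0(x)f(x)=0$, and set $\omega_n=f(X_n)$. $\mathbb{E}$ denotes expectation with respect to the law of $X$. For $t\ge1$ define the $\Sigma\times\Sigma$ matrix $M(t,\beta,h)(x,y)=K(t)Q^t(x,y)e^{\beta f(y)+h}$, and for $b\ge0$, $A(b,\beta,h)=\sum_{t\ge1}M(t,\beta,h)e^{-bt}$ (a matrix with positive entries); $\lambda(b,\beta,h)$ denotes its Perron–Frobenius eigenvalue. *)

theory Defs
  imports Complex_Main "HOL-Library.FuncSet"
begin

definition slowly_varying :: "(nat \<Rightarrow> real) \<Rightarrow> bool" where
  "slowly_varying L \<longleftrightarrow> (\<forall>c::real. c > 0 \<longrightarrow>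
     ((\<lambda>n. L (nat \<lfloor>c * real n\<rfloor>) / L n) \<longlongrightarrow> 1) sequentially)"

fun mpow :: "('x::finite \<Rightarrow> 'x \<Rightarrow> real) \<Rightarrow> nat \<Rightarrow> 'x \<Rightarrow> 'x \<Rightarrow> real" where
  "mpow Q 0 = (\<lambda>x y. if x = y then 1 else 0)"
| "mpow Q (Suc n) = (\<lambda>x y. \<Sum>z\<in>UNIV. mpow Q n x z * Q z y)"

definition stochastic_matrix :: "('x::finite \<Rightarrow> 'x \<Rightarrow> real) \<Rightarrow> bool" where
  "stochastic_matrix Q \<longleftrightarrow> (\<forall>x y. Q x y \<ge> 0) \<and> (\<forall>x. (\<Sum>y\<in>UNIV. Q x y) = 1)"

definition irreducible_matrix :: "('x::finite \<Rightarrow> 'x \<Rightarrow> real) \<Rightarrow> bool" where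
  "irreducible_matrix Q \<longleftrightarrow> (\<forall>x y. \<exists>n. mpow Q n x y > 0)"

definition invariant_distribution :: "('x::finite \<Rightarrow> 'x \<Rightarrow> real) \<Rightarrow> ('x \<Rightarrow> real) \<Rightarrow> bool" where
  "invariant_distribution Q \<mu> \<longleftrightarrow> (\<forall>x. \<mu> x \<ge> 0) \<and> (\<Sum>x\<in>UNIV. \<mu> x) = 1 \<and>
     (\<forall>y. (\<Sum>x\<in>UNIV. \<mu> x * Q x y) = \<mu> y)"

definition prev_pt :: "nat set \<Rightarrow> nat \<Rightarrow> nat" where
  "prev_pt S n = Max (insert 0 {m\<in>S. m < n})"

text \<open>Pinned partition function
  \<open>Z_{N,\<beta>,h,\<omega>} = E[exp(\<Sum>_{n=1}^N (\<beta>\<omega>_n+h)\<delta>_n) \<delta>_N]\<close>, written as a sum over the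
  possible sets S = \<tau> \<inter> {1..N} of renewal points, with
  \<open>P(\<tau> \<inter> {1..N} = S, N \<in> \<tau>) = \<Prod> K(gaps)\<close>.\<close>
definition Zpin :: "(nat \<Rightarrow> real) \<Rightarrow> nat \<Rightarrow> real \<Rightarrow> real \<Rightarrow> (nat \<Rightarrow> real) \<Rightarrow> real" where
  "Zpin K N \<beta> h \<omega> =
     (\<Sum>S\<in>{S. S \<subseteq> {1..N} \<and> (N = 0 \<or> N \<in> S)}.
        (\<Prod>n\<in>S. K (n - prev_pt S n)) * exp (\<Sum>n\<in>S. \<beta> * \<omega> n + h))"

text \<open>Annealed partition function \<open>\<EE> Z_N\<close>, with \<open>\<omega>_n = f(X_n)\<close>, X a Markov chain with
  transition matrix Q started from \<mu>0; the expectation is over the law of \<open>(X_0,\<dots>,X_N)\<close>.\<close>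
definition EZ :: "(nat \<Rightarrow> real) \<Rightarrow> ('x::finite \<Rightarrow> 'x \<Rightarrow> real) \<Rightarrow> ('x \<Rightarrow> real) \<Rightarrow> ('x \<Rightarrow> real)
                   \<Rightarrow> nat \<Rightarrow> real \<Rightarrow> real \<Rightarrow> real" where
  "EZ K Q \<mu> f N \<beta> h =
     (\<Sum>x\<in>PiE {..N} (\<lambda>_. UNIV).
        \<mu> (x 0) * (\<Prod>i\<in>{1..N}. Q (x (i - 1)) (x i)) * Zpin K N \<beta> h (\<lambda>n. f (x n)))"

definition Amat :: "(nat \<Rightarrow> real) \<Rightarrow> ('x::finite \<Rightarrow> 'x \<Rightarrow> real) \<Rightarrow> ('x \<Rightarrow> real)
                     \<Rightarrow> real \<Rightarrow> real \<Rightarrow> real \<Rightarrow> 'x \<Rightarrow> 'x \<Rightarrow> real" where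
  "Amat K Q f b \<beta> h x y =
     (\<Sum>t. K (Suc t) * mpow Q (Suc t) x y * exp (\<beta> * f y + h) * exp (- b * real (Suc t)))"

definition pf_eigenvalue :: "('x::finite \<Rightarrow> 'x \<Rightarrow> real) \<Rightarrow> real" where
  "pf_eigenvalue M = (THE r. \<exists>v. (\<forall>x. v x > 0) \<and> (\<forall>x. (\<Sum>y\<in>UNIV. M x y * v y) = r * v x))"

definition lam :: "(nat \<Rightarrow> real) \<Rightarrow> ('x::finite \<Rightarrow> 'x \<Rightarrow> real) \<Rightarrow> ('x \<Rightarrow> real)
                   \<Rightarrow> real \<Rightarrow> real \<Rightarrow> real \<Rightarrow> real" where
  "lam K Q f b \<beta> h = pf_eigenvalue (Amat K Q f b \<beta> h)"

definition Fa :: "(nat \<Rightarrow> real) \<Rightarrow> ('x::finite \<Rightarrow> 'x \<Rightarrow> real) \<Rightarrow> ('x \<Rightarrow> real)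
                  \<Rightarrow> real \<Rightarrow> real \<Rightarrow> real" where
  "Fa K Q f \<beta> h = (if lam K Q f 0 \<beta> h > 1
                     then (THE b. b > 0 \<and> lam K Q f b \<beta> h = 1) else 0)"

end

theory Submission
  imports Defs "HOL-Analysis.Analysis"
begin

text \<open>Summing out the Markov chain between consecutive renewal points, the annealed partition
  function with \<open>X_N = y\<close> fixed satisfies a matrix renewal equation with the kernel \<open>M(t)\<close>.
  Tilting it by \<open>e^{-bN}\<close> and testing against a positive Perron--Frobenius eigenvector \<open>v\<close> of
  \<open>A(b, \<beta>, h)\<close> yields a quantity (the mass of the paths straddling \<open>N\<close>) that changes by
  \<open>(\<lambda>(b) - 1) \<langle>U_N e^{-bN}, v\<rangle>\<close> at each step. For \<open>\<lambda>(b) \<le> 1\<close> this gives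
  \<open>\<EE>Z_N \<le> C e^{bN}\<close>. For \<open>\<lambda>(b) = 1\<close> and \<open>b > 0\<close> the straddling mass is constant, so a
  geometrically discounted sum of the tilted masses stays bounded below, tilted masses of order
  one recur in windows of bounded length, and \<open>\<EE>Z_N \<ge> c e^{bN}\<close>.

  The eigenvalue \<open>\<lambda>(b)\<close> exists by Brouwer's theorem and is continuous and strictly decreasing
  in \<open>b\<close>, so \<open>\<lambda>(b) = 1\<close> has a unique root when \<open>\<lambda>(0) > 1\<close>. When \<open>\<lambda>(0) \<le> 1\<close>, the
  upper bound at \<open>b = 0\<close> together with \<open>\<EE>Z_N \<ge> c K(N)\<close>, which decays only polynomially,
  gives free energy \<open>0\<close>. Finally \<open>\<lambda>(0, \<beta>, h) = e^h \<lambda>(0, \<beta>, 0)\<close> locates the critical point.\<close>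

lemma mpow_nonneg: "stochastic_matrix Q \<Longrightarrow> mpow Q n x y \<ge> 0"
  by (induction n arbitrary: y) (auto simp: stochastic_matrix_def intro!: sum_nonneg)

lemma mpow_row_sum: "stochastic_matrix Q \<Longrightarrow> (\<Sum>y\<in>UNIV. mpow Q n x y) = 1"
proof (induction n)
  case (Suc n)
  have "(\<Sum>y\<in>UNIV. mpow Q (Suc n) x y) = (\<Sum>z\<in>UNIV. \<Sum>y\<in>UNIV. mpow Q n x z * Q z y)"
    unfolding mpow.simps by (rule sum.swap)
  also have "\<dots> = (\<Sum>z\<in>UNIV. mpow Q n x z * (\<Sum>y\<in>UNIV. Q z y))"
    by (simp add: sum_distrib_left)
  also have "\<dots> = 1" using Suc by (simp add: stochastic_matrix_def)
  finally show ?case .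
qed simp

lemma mpow_le_1: "stochastic_matrix Q \<Longrightarrow> mpow Q n x y \<le> 1"
  using member_le_sum[of y UNIV "mpow Q n x"] mpow_nonneg[of Q n x] mpow_row_sum[of Q n x] by simp

lemma mpow_add: "mpow Q (m + n) x y = (\<Sum>z\<in>UNIV. mpow Q m x z * mpow Q n z y)"
proof (induction n arbitrary: y)
  case 0
  have "(\<Sum>z\<in>UNIV. mpow Q m x z * mpow Q 0 z y) = (\<Sum>z\<in>UNIV. if z = y then mpow Q m x y else 0)"
    by (rule sum.cong) auto
  then show ?case by simp
next
  case (Suc n)
  have "mpow Q (m + Suc n) x y = (\<Sum>w\<in>UNIV. \<Sum>z\<in>UNIV. mpow Q m x z * mpow Q n z w * Q w y)"
    using Suc by (simp add: sum_distrib_right)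
  also have "\<dots> = (\<Sum>z\<in>UNIV. mpow Q m x z * mpow Q (Suc n) z y)"
    by (subst sum.swap) (simp add: sum_distrib_left mult_ac)
  finally show ?case .
qed

lemma mpow_1: "mpow Q (Suc 0) x y = Q x y"
proof -
  have "(\<Sum>z\<in>UNIV. (if x = z then 1 else 0) * Q z y) = (\<Sum>z\<in>UNIV. if z = x then Q x y else 0)"
    by (rule sum.cong) auto
  then show ?thesis by simp
qed

lemma irreducible_mpow_Suc_pos:
  assumes Q: "stochastic_matrix Q" and irr: "irreducible_matrix Q"
  shows "\<exists>t. mpow Q (Suc t) x y > 0"
proof -
  obtain n where n: "mpow Q n x y > 0" using irr unfolding irreducible_matrix_def by blast
  show ?thesis
  proof (cases n)
    case (Suc t) then show ?thesis using n by blast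
  next
    case 0
    then have xy: "x = y" using n by (auto split: if_splits)
    obtain z where z: "Q x z > 0"
    proof (rule ccontr)
      assume "\<not> thesis"
      then have "\<And>z. Q x z \<le> 0" using that by (meson not_le)
      then have "(\<Sum>z\<in>UNIV. Q x z) \<le> 0" by (simp add: sum_nonpos)
      then show False using Q unfolding stochastic_matrix_def by simp
    qed
    obtain n' where n': "mpow Q n' z x > 0" using irr unfolding irreducible_matrix_def by blast
    have "0 < mpow Q (Suc 0) x z * mpow Q n' z x" using z n' by (simp only: mpow_1) (rule mult_pos_pos)
    also have "\<dots> \<le> (\<Sum>w\<in>UNIV. mpow Q (Suc 0) x w * mpow Q n' w x)"
      by (rule member_le_sum) (simp_all add: mpow_nonneg[OF Q] del: mpow.simps)
    also have "\<dots> = mpow Q (Suc n') x x" by (simp only: mpow_add[symmetric]) simp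
    finally show ?thesis using xy by blast
  qed
qed

section \<open>Perron--Frobenius eigenvalue of a positive matrix\<close>

lemma collatz_wielandt_upper:
  fixes M :: "'x::finite \<Rightarrow> 'x \<Rightarrow> real"
  assumes M: "\<And>x y. M x y \<ge> 0"
    and w: "\<And>x. w x > 0" "\<And>x. (\<Sum>y\<in>UNIV. M x y * w y) = r * w x"
    and v: "\<And>x. v x > 0" "\<And>x. (\<Sum>y\<in>UNIV. M x y * v y) \<le> c * v x"
  shows "r \<le> c"
proof -
  define d where "d = Max (range (\<lambda>x. w x / v x))"
  have "d \<in> range (\<lambda>x. w x / v x)" unfolding d_def by (rule Max_in) auto
  then obtain x0 where x0: "d = w x0 / v x0" by auto
  have le: "w y \<le> d * v y" for y
    using Max_ge[of "range (\<lambda>x. w x / v x)" "w y / v y"] v(1)[of y]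
    unfolding d_def by (simp add: divide_le_eq)
  have d0: "d \<ge> 0" using x0 w(1)[of x0] v(1)[of x0] by simp
  have "r * w x0 = (\<Sum>y\<in>UNIV. M x0 y * w y)" using w(2) by simp
  also have "\<dots> \<le> (\<Sum>y\<in>UNIV. M x0 y * (d * v y))"
    by (rule sum_mono) (rule mult_left_mono[OF le M])
  also have "\<dots> = d * (\<Sum>y\<in>UNIV. M x0 y * v y)" by (simp add: sum_distrib_left mult_ac)
  also have "\<dots> \<le> d * (c * v x0)" by (rule mult_left_mono[OF v(2) d0])
  also have "\<dots> = c * w x0" using x0 v(1)[of x0] by simp
  finally show ?thesis using w(1)[of x0] by simp
qed

lemma collatz_wielandt_lower:
  fixes M :: "'x::finite \<Rightarrow> 'x \<Rightarrow> real"
  assumes M: "\<And>x y. M x y \<ge> 0"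
    and w: "\<And>x. w x > 0" "\<And>x. (\<Sum>y\<in>UNIV. M x y * w y) = r * w x"
    and v: "\<And>x. v x > 0" "\<And>x. (\<Sum>y\<in>UNIV. M x y * v y) \<ge> c * v x"
  shows "c \<le> r"
proof -
  define d where "d = Min (range (\<lambda>x. w x / v x))"
  have "d \<in> range (\<lambda>x. w x / v x)" unfolding d_def by (rule Min_in) auto
  then obtain x0 where x0: "d = w x0 / v x0" by auto
  have le: "d * v y \<le> w y" for y
    using Min_le[of "range (\<lambda>x. w x / v x)" "w y / v y"] v(1)[of y]
    unfolding d_def by (simp add: le_divide_eq)
  have d0: "d \<ge> 0" using x0 w(1)[of x0] v(1)[of x0] by simp
  have "c * w x0 = d * (c * v x0)" using x0 v(1)[of x0] by simp
  also have "\<dots> \<le> d * (\<Sum>y\<in>UNIV. M x0 y * v y)" by (rule mult_left_mono[OF v(2) d0])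
  also have "\<dots> = (\<Sum>y\<in>UNIV. M x0 y * (d * v y))" by (simp add: sum_distrib_left mult_ac)
  also have "\<dots> \<le> (\<Sum>y\<in>UNIV. M x0 y * w y)"
    by (rule sum_mono) (rule mult_left_mono[OF le M])
  also have "\<dots> = r * w x0" using w(2) by simp
  finally show ?thesis using w(1)[of x0] by simp
qed

lemma pf_eigenvalue_eqI:
  fixes M :: "'x::finite \<Rightarrow> 'x \<Rightarrow> real"
  assumes M: "\<And>x y. M x y \<ge> 0"
    and v: "\<And>x. v x > 0" "\<And>x. (\<Sum>y\<in>UNIV. M x y * v y) = r * v x"
  shows "pf_eigenvalue M = r"
  unfolding pf_eigenvalue_def
proof (rule the_equality)
  show "\<exists>v. (\<forall>x. 0 < v x) \<and> (\<forall>x. (\<Sum>y\<in>UNIV. M x y * v y) = r * v x)" using v by blast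
  fix s assume "\<exists>w. (\<forall>x. 0 < w x) \<and> (\<forall>x. (\<Sum>y\<in>UNIV. M x y * w y) = s * w x)"
  then obtain w where w: "\<And>x. 0 < w x" "\<And>x. (\<Sum>y\<in>UNIV. M x y * w y) = s * w x" by blast
  have "s \<le> r" by (rule collatz_wielandt_upper[of M w s v r]) (use M w v in auto)
  moreover have "r \<le> s" by (rule collatz_wielandt_lower[of M w s v r]) (use M w v in auto)
  ultimately show "s = r" by simp
qed

definition prob_simplex :: "(real^'n::finite) set" where
  "prob_simplex = {v. (\<forall>i. 0 \<le> v $ i) \<and> (\<Sum>i\<in>UNIV. v $ i) = 1}"

lemma compact_prob_simplex: "compact prob_simplex"
proof (subst compact_eq_bounded_closed, rule conjI)
  have "norm v \<le> 1" if "v \<in> prob_simplex" for v :: "real^'n"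
  proof -
    have "norm v \<le> (\<Sum>i\<in>UNIV. \<bar>v $ i\<bar>)" by (rule norm_le_l1_cart)
    also have "\<dots> = 1" using that unfolding prob_simplex_def by simp
    finally show ?thesis .
  qed
  then show "bounded (prob_simplex :: (real^'n) set)" unfolding bounded_iff by blast
  show "closed (prob_simplex :: (real^'n) set)" unfolding prob_simplex_def
    by (intro closed_Collect_conj closed_Collect_all closed_Collect_le closed_Collect_eq continuous_intros)
qed

lemma convex_prob_simplex: "convex prob_simplex"
  unfolding convex_def prob_simplex_def by (auto simp: sum.distrib sum_distrib_left[symmetric])

lemma prob_simplex_nonempty: "prob_simplex \<noteq> {}"
proof -
  have "(\<chi> i. 1 / real CARD('n)) \<in> (prob_simplex :: (real^'n) set)" unfolding prob_simplex_def by simp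
  then show ?thesis by blast
qed

lemma prob_simplex_pos_entry:
  assumes "v \<in> prob_simplex"
  obtains i where "v $ i > 0"
proof (rule ccontr)
  assume "\<not> thesis"
  then have "\<And>i. v $ i \<le> 0" using that by (meson not_le)
  then have "(\<Sum>i\<in>UNIV. v $ i) \<le> 0" by (simp add: sum_nonpos)
  then show False using assms unfolding prob_simplex_def by simp
qed

text \<open>The positive eigenvector is a fixed point of \<open>v \<mapsto> Mv / \<Sum>(Mv)\<close> on the simplex,
  which exists by Brouwer's theorem.\<close>

lemma positive_matrix_pos_eigenvector:
  fixes M :: "'x::finite \<Rightarrow> 'x \<Rightarrow> real"
  assumes M: "\<And>x y. M x y > 0"
  obtains r v where "r > 0" "\<And>x. v x > 0" "\<And>x. (\<Sum>y\<in>UNIV. M x y * v y) = r * v x"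
proof -
  define s where "s v = (\<Sum>x\<in>UNIV. \<Sum>y\<in>UNIV. M x y * v $ y)" for v :: "real^'x"
  define F where "F v = (\<chi> x. (\<Sum>y\<in>UNIV. M x y * v $ y) / s v)" for v :: "real^'x"
  have row_pos: "(\<Sum>y\<in>UNIV. M x y * v $ y) > 0" if v: "v \<in> prob_simplex" for v :: "real^'x" and x
  proof -
    obtain i where "v $ i > 0" using prob_simplex_pos_entry v by blast
    then show ?thesis using v M unfolding prob_simplex_def
      by (intro sum_pos2[of UNIV i]) (auto intro: mult_nonneg_nonneg less_imp_le)
  qed
  have s_pos: "s v > 0" if "v \<in> prob_simplex" for v :: "real^'x"
    unfolding s_def by (rule sum_pos) (simp_all add: row_pos[OF that])
  have continuous: "continuous_on prob_simplex F"
    unfolding F_def s_def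
    by (intro continuous_on_vec_lambda continuous_intros) (use s_pos[unfolded s_def] in force)
  have into: "F \<in> prob_simplex \<rightarrow> prob_simplex"
  proof
    fix v :: "real^'x" assume v: "v \<in> prob_simplex"
    have "(\<Sum>i\<in>UNIV. F v $ i) = (\<Sum>i\<in>UNIV. \<Sum>y\<in>UNIV. M i y * v $ y) / s v"
      unfolding F_def by (simp add: sum_divide_distrib)
    also have "\<dots> = 1" using s_pos[OF v] unfolding s_def by simp
    finally show "F v \<in> prob_simplex" unfolding prob_simplex_def using row_pos[OF v] s_pos[OF v]
      by (auto simp: F_def less_imp_le)
  qed
  obtain v where v: "v \<in> prob_simplex" "F v = v"
    using brouwer[OF compact_prob_simplex convex_prob_simplex prob_simplex_nonempty continuous into]
    by blast
  have fix_v: "v $ x = (\<Sum>y\<in>UNIV. M x y * v $ y) / s v" for x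
    using v(2) unfolding F_def by (metis vec_lambda_beta)
  show ?thesis
  proof (rule that[of "s v" "\<lambda>x. v $ x"])
    show "s v > 0" by (rule s_pos[OF v(1)])
    show "v $ x > 0" for x using fix_v[of x] s_pos[OF v(1)] row_pos[OF v(1)] by simp
    show "(\<Sum>y\<in>UNIV. M x y * v $ y) = s v * v $ x" for x
      using fix_v[of x] s_pos[OF v(1)] by (simp add: field_simps)
  qed
qed

lemma pos_eigenvalue_perturbation:
  fixes M N :: "'x::finite \<Rightarrow> 'x \<Rightarrow> real"
  assumes M: "\<And>x y. M x y \<ge> 0" and N: "\<And>x y. N x y \<ge> 0"
    and v: "\<And>x. v x > 0" "\<And>x. (\<Sum>y\<in>UNIV. M x y * v y) = r * v x"
    and w: "\<And>x. w x > 0" "\<And>x. (\<Sum>y\<in>UNIV. N x y * w y) = s * w x"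
    and close: "\<And>x y. \<bar>N x y - M x y\<bar> \<le> \<eta>"
  shows "\<bar>s - r\<bar> \<le> \<eta> * (\<Sum>y\<in>UNIV. v y) / Min (range v)"
proof -
  define vm where "vm = Min (range v)"
  have "vm \<in> range v" unfolding vm_def by (rule Min_in) auto
  then have vm0: "vm > 0" using v(1) by auto
  have vmle: "vm \<le> v x" for x unfolding vm_def by (rule Min_le) auto
  define C where "C = (\<Sum>y\<in>UNIV. v y) / vm"
  have eta0: "\<eta> \<ge> 0" using close[of undefined undefined] by simp
  have "(\<Sum>y\<in>UNIV. v y) \<ge> 0" by (rule sum_nonneg) (use v(1) in \<open>auto intro: less_imp_le\<close>)
  then have C0: "C \<ge> 0" unfolding C_def using vm0 by simp
  have vsle: "(\<Sum>y\<in>UNIV. v y) \<le> C * v x" for x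
  proof -
    have "(\<Sum>y\<in>UNIV. v y) = C * vm" unfolding C_def using vm0 by simp
    also have "\<dots> \<le> C * v x" by (rule mult_left_mono[OF vmle C0])
    finally show ?thesis .
  qed
  have cl1: "N x y \<le> M x y + \<eta>" "M x y - \<eta> \<le> N x y" for x y using close[of x y] by (simp_all add: abs_le_iff)
  have up: "(\<Sum>y\<in>UNIV. N x y * v y) \<le> (r + \<eta> * C) * v x" for x
  proof -
    have "(\<Sum>y\<in>UNIV. N x y * v y) \<le> (\<Sum>y\<in>UNIV. (M x y + \<eta>) * v y)"
      by (intro sum_mono mult_right_mono) (use cl1 v(1) in \<open>auto intro: less_imp_le\<close>)
    also have "\<dots> = r * v x + \<eta> * (\<Sum>y\<in>UNIV. v y)"
      using v(2)[of x] by (simp add: algebra_simps sum.distrib sum_distrib_left)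
    also have "\<dots> \<le> r * v x + \<eta> * (C * v x)" by (intro add_left_mono mult_left_mono vsle eta0)
    finally show ?thesis by (simp add: algebra_simps)
  qed
  have lo: "(r - \<eta> * C) * v x \<le> (\<Sum>y\<in>UNIV. N x y * v y)" for x
  proof -
    have "(r - \<eta> * C) * v x = r * v x - \<eta> * (C * v x)" by (simp add: algebra_simps)
    also have "\<dots> \<le> r * v x - \<eta> * (\<Sum>y\<in>UNIV. v y)" by (intro diff_left_mono mult_left_mono vsle eta0)
    also have "\<dots> = (\<Sum>y\<in>UNIV. (M x y - \<eta>) * v y)"
      using v(2)[of x] by (simp add: algebra_simps sum_subtractf sum_distrib_left)
    also have "\<dots> \<le> (\<Sum>y\<in>UNIV. N x y * v y)"
      by (intro sum_mono mult_right_mono) (use cl1 v(1) in \<open>auto intro: less_imp_le\<close>)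
    finally show ?thesis .
  qed
  have "s \<le> r + \<eta> * C" by (rule collatz_wielandt_upper[where M=N and w=w and v=v]) (use N w v up in auto)
  moreover have "r - \<eta> * C \<le> s" by (rule collatz_wielandt_lower[where M=N and w=w and v=v]) (use N w v lo in auto)
  ultimately show ?thesis unfolding C_def vm_def by (simp add: abs_le_iff)
qed


definition pinned_sets :: "nat \<Rightarrow> nat set set" where
  "pinned_sets N = {S. S \<subseteq> {1..N} \<and> (N = 0 \<or> N \<in> S)}"

lemma finite_pinned_sets: "finite (pinned_sets N)"
  unfolding pinned_sets_def by (rule finite_subset[of _ "Pow {1..N}"]) auto

lemma Zpin_pinned_sets:
  "Zpin K N \<beta> h \<omega> = (\<Sum>S\<in>pinned_sets N. (\<Prod>n\<in>S. K (n - prev_pt S n)) * exp (\<Sum>n\<in>S. \<beta> * \<omega> n + h))"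
  unfolding Zpin_def pinned_sets_def by simp

lemma prev_pt_less: "0 < N \<Longrightarrow> finite S \<Longrightarrow> prev_pt S N < N"
  unfolding prev_pt_def by (subst Max_less_iff) auto

lemma prev_pt_insert_top:
  assumes "S \<in> pinned_sets m" "m < N"
  shows "prev_pt (insert N S) N = m"
proof -
  have "{k \<in> insert N S. k < N} = S" using assms unfolding pinned_sets_def by auto
  moreover have "finite S" using assms unfolding pinned_sets_def by (auto intro: finite_subset)
  ultimately show ?thesis unfolding prev_pt_def
    using assms unfolding pinned_sets_def by (intro Max_eqI) auto
qed

lemma prev_pt_insert_below:
  assumes "S \<subseteq> {1..m}" "m < N" "k \<in> S"
  shows "prev_pt (insert N S) k = prev_pt S k"
proof -
  have "{j \<in> insert N S. j < k} = {j \<in> S. j < k}" using assms by auto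
  then show ?thesis unfolding prev_pt_def by simp
qed

lemma pinned_sets_prev_pt_fiber:
  assumes "m < N"
  shows "{S \<in> pinned_sets N. prev_pt S N = m} = insert N ` pinned_sets m"
proof (intro equalityI subsetI)
  fix S assume "S \<in> {S \<in> pinned_sets N. prev_pt S N = m}"
  then have S: "S \<subseteq> {1..N}" "N \<in> S" and m: "prev_pt S N = m"
    using assms unfolding pinned_sets_def by auto
  define A where "A = {k \<in> S. k < N}"
  have A: "finite A" "S - {N} = A" using S unfolding A_def by (auto intro: finite_subset)
  have m_Max: "m = Max (insert 0 A)" using m unfolding prev_pt_def A_def by simp
  have "S - {N} \<subseteq> {1..m}"
    using S A Max_ge[of "insert 0 A"] unfolding m_Max by fastforce
  moreover have "m = 0 \<or> m \<in> S - {N}"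
    using Max_in[of "insert 0 A"] A unfolding m_Max by auto
  ultimately have "S - {N} \<in> pinned_sets m" unfolding pinned_sets_def by auto
  moreover have "S = insert N (S - {N})" using S by auto
  ultimately show "S \<in> insert N ` pinned_sets m" by blast
next
  fix S assume "S \<in> insert N ` pinned_sets m"
  then obtain S' where S': "S' \<in> pinned_sets m" "S = insert N S'" by auto
  then show "S \<in> {S \<in> pinned_sets N. prev_pt S N = m}"
    using assms prev_pt_insert_top unfolding pinned_sets_def by auto
qed

text \<open>Decomposition according to the last renewal point before \<open>N\<close>.\<close>

lemma Zpin_Suc:
  "Zpin K (Suc n) \<beta> h \<omega> = (\<Sum>m\<le>n. Zpin K m \<beta> h \<omega> * K (Suc n - m) * exp (\<beta> * \<omega> (Suc n) + h))"
proof -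
  define N where "N = Suc n"
  define F where "F S = (\<Prod>n\<in>S. K (n - prev_pt S n)) * exp (\<Sum>n\<in>S. \<beta> * \<omega> n + h)" for S
  have "(\<lambda>S. prev_pt S N) ` pinned_sets N \<subseteq> {..n}"
  proof
    fix m assume "m \<in> (\<lambda>S. prev_pt S N) ` pinned_sets N"
    then obtain S where "S \<in> pinned_sets N" "m = prev_pt S N" by auto
    moreover have "finite S" using \<open>S \<in> pinned_sets N\<close> unfolding pinned_sets_def by (auto intro: finite_subset)
    ultimately show "m \<in> {..n}" using prev_pt_less[of N S] unfolding N_def by auto
  qed
  then have "Zpin K N \<beta> h \<omega> = (\<Sum>m\<le>n. sum F {S \<in> pinned_sets N. prev_pt S N = m})"
    unfolding Zpin_pinned_sets F_def by (intro sum.group[symmetric] finite_pinned_sets) auto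
  also have "\<dots> = (\<Sum>m\<le>n. Zpin K m \<beta> h \<omega> * K (N - m) * exp (\<beta> * \<omega> N + h))"
  proof (rule sum.cong[OF refl])
    fix m assume "m \<in> {..n}"
    then have mN: "m < N" unfolding N_def by auto
    have "inj_on (insert N) (pinned_sets m)"
      unfolding inj_on_def pinned_sets_def using mN
      by (metis atLeastAtMost_iff insert_ident linorder_not_le mem_Collect_eq subsetD)
    then have "sum F {S \<in> pinned_sets N. prev_pt S N = m} = (\<Sum>S\<in>pinned_sets m. F (insert N S))"
      unfolding pinned_sets_prev_pt_fiber[OF mN] by (rule sum.reindex[unfolded comp_def])
    also have "\<dots> = (\<Sum>S\<in>pinned_sets m. F S * K (N - m) * exp (\<beta> * \<omega> N + h))"
    proof (rule sum.cong[OF refl])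
      fix S assume S: "S \<in> pinned_sets m"
      then have sub: "S \<subseteq> {1..m}" unfolding pinned_sets_def by auto
      have NS: "N \<notin> S" and fin: "finite S" using sub mN by (auto intro: finite_subset)
      have "(\<Prod>k\<in>S. K (k - prev_pt (insert N S) k)) = (\<Prod>k\<in>S. K (k - prev_pt S k))"
        using prev_pt_insert_below[OF sub mN] by (intro prod.cong) auto
      then show "F (insert N S) = F S * K (N - m) * exp (\<beta> * \<omega> N + h)"
        unfolding F_def using fin NS prev_pt_insert_top[OF S mN] by (simp add: exp_add mult_ac)
    qed
    also have "\<dots> = Zpin K m \<beta> h \<omega> * K (N - m) * exp (\<beta> * \<omega> N + h)"
      unfolding Zpin_pinned_sets F_def by (simp add: sum_distrib_right)
    finally show "sum F {S \<in> pinned_sets N. prev_pt S N = m} = Zpin K m \<beta> h \<omega> * K (N - m) * exp (\<beta> * \<omega> N + h)" .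
  qed
  finally show ?thesis unfolding N_def .
qed

lemma Zpin_0: "Zpin K 0 \<beta> h \<omega> = 1"
proof -
  have "pinned_sets 0 = {{}}" unfolding pinned_sets_def by auto
  then show ?thesis unfolding Zpin_pinned_sets by simp
qed

lemma Zpin_cong:
  assumes "\<And>i. 1 \<le> i \<Longrightarrow> i \<le> m \<Longrightarrow> \<omega> i = \<omega>' i"
  shows "Zpin K m \<beta> h \<omega> = Zpin K m \<beta> h \<omega>'"
  unfolding Zpin_pinned_sets
proof (rule sum.cong[OF refl])
  fix S assume "S \<in> pinned_sets m"
  then have "(\<Sum>n\<in>S. \<beta> * \<omega> n + h) = (\<Sum>n\<in>S. \<beta> * \<omega>' n + h)"
    using assms unfolding pinned_sets_def by (intro sum.cong) auto
  then show "(\<Prod>n\<in>S. K (n - prev_pt S n)) * exp (\<Sum>n\<in>S. \<beta> * \<omega> n + h) =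
         (\<Prod>n\<in>S. K (n - prev_pt S n)) * exp (\<Sum>n\<in>S. \<beta> * \<omega>' n + h)" by simp
qed

section \<open>Renewal equation for the annealed partition function\<close>

definition chain_weight :: "('x::finite \<Rightarrow> real) \<Rightarrow> ('x \<Rightarrow> 'x \<Rightarrow> real) \<Rightarrow> nat \<Rightarrow> (nat \<Rightarrow> 'x) \<Rightarrow> real" where
  "chain_weight \<mu> Q N x = \<mu> (x 0) * (\<Prod>i\<in>{1..N}. Q (x (i - 1)) (x i))"

lemma sum_PiE_atMost_Suc:
  fixes G :: "(nat \<Rightarrow> 'x::finite) \<Rightarrow> real"
  shows "(\<Sum>x\<in>PiE {..Suc N} (\<lambda>_. UNIV). G x) = (\<Sum>x\<in>PiE {..N} (\<lambda>_. UNIV). \<Sum>y\<in>UNIV. G (x(Suc N := y)))"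
proof -
  have atMost_Suc: "{..Suc N} = insert (Suc N) {..N}" by auto
  have "(\<Sum>x\<in>PiE {..Suc N} (\<lambda>_. UNIV). G x)
      = (\<Sum>x\<in>(\<lambda>(y, g). g(Suc N := y)) ` (UNIV \<times> PiE {..N} (\<lambda>_. UNIV)). G x)"
    unfolding atMost_Suc PiE_insert_eq by simp
  also have "\<dots> = (\<Sum>p\<in>UNIV \<times> PiE {..N} (\<lambda>_. (UNIV::'x set)). G ((\<lambda>(y, g). g(Suc N := y)) p))"
    by (rule sum.reindex[unfolded comp_def]) (rule inj_combinator[where T="\<lambda>_. UNIV", simplified], simp)
  also have "\<dots> = (\<Sum>y\<in>UNIV. \<Sum>x\<in>PiE {..N} (\<lambda>_. UNIV). G (x(Suc N := y)))"
    unfolding sum.cartesian_product by (rule sum.cong) auto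
  also have "\<dots> = (\<Sum>x\<in>PiE {..N} (\<lambda>_. UNIV). \<Sum>y\<in>UNIV. G (x(Suc N := y)))"
    by (rule sum.swap)
  finally show ?thesis .
qed

lemma chain_weight_upd:
  "chain_weight \<mu> Q (Suc N) (x(Suc N := y)) = chain_weight \<mu> Q N x * Q (x N) y"
proof -
  have "(\<Prod>i\<in>{1..N}. Q ((x(Suc N := y)) (i - 1)) ((x(Suc N := y)) i)) = (\<Prod>i\<in>{1..N}. Q (x (i - 1)) (x i))"
    by (rule prod.cong) auto
  then show ?thesis unfolding chain_weight_def by (subst prod.cl_ivl_Suc) auto
qed

text \<open>Markov property: summing out the chain after time \<open>m\<close> leaves the \<open>k\<close>-step kernel.\<close>

lemma sum_chain_weight_marginal:
  fixes G :: "(nat \<Rightarrow> 'x::finite) \<Rightarrow> real"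
  assumes G: "\<And>x x'. (\<forall>i\<le>m. x i = x' i) \<Longrightarrow> G x = G x'"
  shows "(\<Sum>x\<in>PiE {..m+k} (\<lambda>_. UNIV). chain_weight \<mu> Q (m+k) x * G x * \<phi> (x (m+k)))
       = (\<Sum>x\<in>PiE {..m} (\<lambda>_. UNIV). chain_weight \<mu> Q m x * G x * (\<Sum>y\<in>UNIV. mpow Q k (x m) y * \<phi> y))"
proof (induction k arbitrary: \<phi>)
  case 0
  have "(\<Sum>y\<in>UNIV. mpow Q 0 a y * \<phi> y) = (\<Sum>y\<in>UNIV. if a = y then \<phi> y else 0)" for a
    by (rule sum.cong) auto
  then show ?case by simp
next
  case (Suc k)
  have "(\<Sum>x\<in>PiE {..m + Suc k} (\<lambda>_. UNIV). chain_weight \<mu> Q (m + Suc k) x * G x * \<phi> (x (m + Suc k)))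
     = (\<Sum>x\<in>PiE {..m+k} (\<lambda>_. UNIV). \<Sum>y\<in>UNIV.
          chain_weight \<mu> Q (Suc (m+k)) (x(Suc (m+k) := y)) * G (x(Suc (m+k) := y)) * \<phi> y)"
    by (simp add: sum_PiE_atMost_Suc)
  also have "\<dots> = (\<Sum>x\<in>PiE {..m+k} (\<lambda>_. UNIV).
                   chain_weight \<mu> Q (m+k) x * G x * (\<Sum>y\<in>UNIV. Q (x (m+k)) y * \<phi> y))"
  proof (rule sum.cong[OF refl])
    fix x
    have "G (x(Suc (m+k) := y)) = G x" for y by (rule G) auto
    then show "(\<Sum>y\<in>UNIV. chain_weight \<mu> Q (Suc (m+k)) (x(Suc (m+k) := y)) * G (x(Suc (m+k) := y)) * \<phi> y) =
      chain_weight \<mu> Q (m+k) x * G x * (\<Sum>y\<in>UNIV. Q (x (m+k)) y * \<phi> y)"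
      by (simp add: chain_weight_upd sum_distrib_left mult_ac)
  qed
  also have "\<dots> = (\<Sum>x\<in>PiE {..m} (\<lambda>_. UNIV).
                   chain_weight \<mu> Q m x * G x * (\<Sum>z\<in>UNIV. mpow Q k (x m) z * (\<Sum>y\<in>UNIV. Q z y * \<phi> y)))"
    by (rule Suc.IH)
  also have "\<dots> = (\<Sum>x\<in>PiE {..m} (\<lambda>_. UNIV). chain_weight \<mu> Q m x * G x * (\<Sum>y\<in>UNIV. mpow Q (Suc k) (x m) y * \<phi> y))"
  proof -
    have "(\<Sum>z\<in>UNIV. mpow Q k a z * (\<Sum>y\<in>UNIV. Q z y * \<phi> y)) = (\<Sum>y\<in>UNIV. mpow Q (Suc k) a y * \<phi> y)" for a
    proof -
      have "(\<Sum>z\<in>UNIV. mpow Q k a z * (\<Sum>y\<in>UNIV. Q z y * \<phi> y)) = (\<Sum>z\<in>UNIV. \<Sum>y\<in>UNIV. mpow Q k a z * Q z y * \<phi> y)"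
        by (simp add: sum_distrib_left mult.assoc)
      also have "\<dots> = (\<Sum>y\<in>UNIV. \<Sum>z\<in>UNIV. mpow Q k a z * Q z y * \<phi> y)"
        by (rule sum.swap)
      finally show ?thesis by (simp add: sum_distrib_right)
    qed
    then show ?thesis by simp
  qed
  finally show ?case by simp
qed

text \<open>\<open>EZ_end K Q \<mu> f \<beta> h N y = \<EE>[Z_N; X_N = y]\<close>, written \<open>U_N(y)\<close> below.\<close>

definition EZ_end :: "(nat \<Rightarrow> real) \<Rightarrow> ('x::finite \<Rightarrow> 'x \<Rightarrow> real) \<Rightarrow> ('x \<Rightarrow> real) \<Rightarrow> ('x \<Rightarrow> real)
                   \<Rightarrow> real \<Rightarrow> real \<Rightarrow> nat \<Rightarrow> 'x \<Rightarrow> real" where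
  "EZ_end K Q \<mu> f \<beta> h N y =
     (\<Sum>x\<in>PiE {..N} (\<lambda>_. UNIV). chain_weight \<mu> Q N x * Zpin K N \<beta> h (\<lambda>n. f (x n)) * (if x N = y then 1 else 0))"

lemma sum_split_by_value:
  fixes F :: "(nat \<Rightarrow> 'x::finite) \<Rightarrow> real"
  shows "(\<Sum>x\<in>A. F x * g (x m)) = (\<Sum>z\<in>UNIV. g z * (\<Sum>x\<in>A. F x * (if x m = z then 1 else 0)))"
proof -
  have "F x * g (x m) = (\<Sum>z\<in>UNIV. F x * (if x m = z then 1 else 0) * g z)" for x
  proof -
    have "(\<Sum>z\<in>UNIV. F x * (if x m = z then 1 else 0) * g z) = (\<Sum>z\<in>UNIV. if x m = z then F x * g z else 0)"
      by (rule sum.cong) auto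
    then show ?thesis by simp
  qed
  then have "(\<Sum>x\<in>A. F x * g (x m)) = (\<Sum>z\<in>UNIV. \<Sum>x\<in>A. F x * (if x m = z then 1 else 0) * g z)"
    by (simp add: sum.swap[of _ A])
  then show ?thesis by (simp add: sum_distrib_left mult_ac)
qed

lemma EZ_eq_sum_EZ_end: "EZ K Q \<mu> f N \<beta> h = (\<Sum>y\<in>UNIV. EZ_end K Q \<mu> f \<beta> h N y)"
proof -
  have "(\<Sum>y\<in>UNIV. EZ_end K Q \<mu> f \<beta> h N y) = (\<Sum>x\<in>PiE {..N} (\<lambda>_. UNIV).
          \<Sum>y\<in>UNIV. chain_weight \<mu> Q N x * Zpin K N \<beta> h (\<lambda>n. f (x n)) * (if x N = y then 1 else 0))"
    unfolding EZ_end_def by (rule sum.swap)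
  also have "\<dots> = (\<Sum>x\<in>PiE {..N} (\<lambda>_. UNIV). chain_weight \<mu> Q N x * Zpin K N \<beta> h (\<lambda>n. f (x n)))"
    by (simp only: sum_distrib_left[symmetric]) simp
  finally show ?thesis unfolding EZ_def chain_weight_def by simp
qed

lemma EZ_end_0: "EZ_end K Q \<mu> f \<beta> h 0 y = \<mu> y"
proof -
  have "{..0::nat} = insert 0 {}" by auto
  then have "PiE {..0::nat} (\<lambda>_. UNIV::'a set) = (\<lambda>(y, g). g(0 := y)) ` (UNIV \<times> PiE {} (\<lambda>_. UNIV))"
    by (simp only: PiE_insert_eq)
  also have "\<dots> = (\<lambda>z. (\<lambda>_. undefined)(0 := z)) ` (UNIV::'a set)" by auto
  finally have PiE_0: "PiE {..0::nat} (\<lambda>_. UNIV::'a set) = (\<lambda>z. (\<lambda>_. undefined)(0 := z)) ` UNIV" .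
  have inj: "inj_on (\<lambda>z. ((\<lambda>_. undefined)(0 := z)) :: nat \<Rightarrow> 'x) UNIV"
    by (rule inj_onI) (metis fun_upd_same)
  have "EZ_end K Q \<mu> f \<beta> h 0 y = (\<Sum>z\<in>UNIV. if z = y then \<mu> y else 0)"
    unfolding EZ_end_def PiE_0 sum.reindex[OF inj] by (intro sum.cong) (auto simp: chain_weight_def Zpin_0)
  then show ?thesis by simp
qed

text \<open>Summing out the chain between the last two renewal points turns \<open>Zpin_Suc\<close> into the
  matrix renewal equation \<open>U_{n+1} = \<Sum>_{m\<le>n} U_m M(n+1-m)\<close>.\<close>

lemma EZ_end_Suc:
  fixes Q :: "'x::finite \<Rightarrow> 'x \<Rightarrow> real"
  shows "EZ_end K Q \<mu> f \<beta> h (Suc n) y =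
     (\<Sum>m\<le>n. K (Suc n - m) * (\<Sum>z\<in>UNIV. EZ_end K Q \<mu> f \<beta> h m z * mpow Q (Suc n - m) z y) * exp (\<beta> * f y + h))"
proof -
  define N where "N = Suc n"
  define P :: "nat \<Rightarrow> (nat \<Rightarrow> 'x) set" where "P m = PiE {..m} (\<lambda>_. UNIV::'x set)" for m
  define \<psi> where "\<psi> w = exp (\<beta> * f w + h) * (if w = y then 1 else 0)" for w
  have "EZ_end K Q \<mu> f \<beta> h N y = (\<Sum>x\<in>P N. chain_weight \<mu> Q N x *
      (\<Sum>m\<le>n. Zpin K m \<beta> h (\<lambda>k. f (x k)) * K (N - m) * exp (\<beta> * f (x N) + h)) * (if x N = y then 1 else 0))"
    unfolding EZ_end_def P_def N_def Zpin_Suc ..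
  also have "\<dots> = (\<Sum>m\<le>n. K (N - m) * (\<Sum>x\<in>P N. chain_weight \<mu> Q N x * Zpin K m \<beta> h (\<lambda>k. f (x k)) * \<psi> (x N)))"
    unfolding \<psi>_def by (simp add: sum_distrib_left sum_distrib_right mult_ac sum.swap[of _ "P N"])
  also have "\<dots> = (\<Sum>m\<le>n. K (N - m) * (\<Sum>z\<in>UNIV. EZ_end K Q \<mu> f \<beta> h m z * mpow Q (N - m) z y) * exp (\<beta> * f y + h))"
  proof (rule sum.cong[OF refl])
    fix m assume "m \<in> {..n}"
    then have mN: "m + (N - m) = N" unfolding N_def by auto
    have G: "Zpin K m \<beta> h (\<lambda>k. f (x k)) = Zpin K m \<beta> h (\<lambda>k. f (x' k))"
      if "\<forall>i\<le>m. x i = x' i" for x x' :: "nat \<Rightarrow> 'x"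
      by (rule Zpin_cong) (use that in auto)
    have \<psi>_sum: "(\<Sum>w\<in>UNIV. mpow Q (N - m) a w * \<psi> w) = mpow Q (N - m) a y * exp (\<beta> * f y + h)" for a
    proof -
      have "(\<Sum>w\<in>UNIV. mpow Q (N - m) a w * \<psi> w) = (\<Sum>w\<in>UNIV. if w = y then mpow Q (N - m) a y * exp (\<beta> * f y + h) else 0)"
        unfolding \<psi>_def by (rule sum.cong) auto
      then show ?thesis by simp
    qed
    have "(\<Sum>x\<in>P N. chain_weight \<mu> Q N x * Zpin K m \<beta> h (\<lambda>k. f (x k)) * \<psi> (x N))
        = (\<Sum>x\<in>P m. chain_weight \<mu> Q m x * Zpin K m \<beta> h (\<lambda>k. f (x k)) * (mpow Q (N - m) (x m) y * exp (\<beta> * f y + h)))"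
      using sum_chain_weight_marginal[where G="\<lambda>x. Zpin K m \<beta> h (\<lambda>k. f (x k))" and m=m and k="N - m"
          and \<mu>=\<mu> and Q=Q and \<phi>=\<psi>, OF G]
      unfolding mN P_def \<psi>_sum by simp
    also have "\<dots> = (\<Sum>z\<in>UNIV. EZ_end K Q \<mu> f \<beta> h m z * mpow Q (N - m) z y) * exp (\<beta> * f y + h)"
      unfolding sum_split_by_value[where g="\<lambda>z. mpow Q (N - m) z y * exp (\<beta> * f y + h)"]
      unfolding EZ_end_def P_def by (simp add: sum_distrib_right sum_distrib_left mult_ac)
    finally show "K (N - m) * (\<Sum>x\<in>P N. chain_weight \<mu> Q N x * Zpin K m \<beta> h (\<lambda>k. f (x k)) * \<psi> (x N)) =
         K (N - m) * (\<Sum>z\<in>UNIV. EZ_end K Q \<mu> f \<beta> h m z * mpow Q (N - m) z y) * exp (\<beta> * f y + h)" by simp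
  qed
  finally show ?thesis unfolding N_def .
qed

declare mpow.simps(2)[simp del]

locale annealed_pinning =
  fixes K :: "nat \<Rightarrow> real" and Q :: "'x::finite \<Rightarrow> 'x \<Rightarrow> real" and \<mu> :: "'x \<Rightarrow> real"
    and f :: "'x \<Rightarrow> real"
  assumes K_pos: "\<And>n. n \<ge> 1 \<Longrightarrow> K n > 0"
    and K_sums: "(\<lambda>n. K (Suc n)) sums 1"
    and Q_stochastic: "stochastic_matrix Q" and Q_irreducible: "irreducible_matrix Q"
    and \<mu>_invariant: "invariant_distribution Q \<mu>"
begin

lemma K_summable: "summable (\<lambda>n. K (Suc n))"
  using K_sums by (rule sums_summable)

lemma K_le_1:
  assumes "n \<ge> 1"
  shows "K n \<le> 1"
proof -
  obtain m where n: "n = Suc m" using assms by (cases n) auto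
  have "sum (\<lambda>n. K (Suc n)) {m} \<le> suminf (\<lambda>n. K (Suc n))"
    by (rule sum_le_suminf[OF K_summable]) (auto intro: less_imp_le[OF K_pos])
  then show ?thesis using K_sums n by (simp add: sums_iff)
qed

definition Amat_summand :: "real \<Rightarrow> real \<Rightarrow> real \<Rightarrow> 'x \<Rightarrow> 'x \<Rightarrow> nat \<Rightarrow> real" where
  "Amat_summand b \<beta> h z y t = K (Suc t) * mpow Q (Suc t) z y * exp (\<beta> * f y + h) * exp (- b * real (Suc t))"

lemma Amat_eq_suminf: "Amat K Q f b \<beta> h z y = (\<Sum>t. Amat_summand b \<beta> h z y t)"
  unfolding Amat_def Amat_summand_def ..

lemma Amat_summand_nonneg: "Amat_summand b \<beta> h z y t \<ge> 0"
  unfolding Amat_summand_def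
  by (intro mult_nonneg_nonneg) (use K_pos[of "Suc t"] mpow_nonneg[OF Q_stochastic] in auto)

lemma Amat_summand_le:
  assumes "b \<ge> 0"
  shows "Amat_summand b \<beta> h z y t \<le> K (Suc t) * exp (\<beta> * f y + h)"
proof -
  have "mpow Q (Suc t) z y * exp (- b * real (Suc t)) \<le> 1 * 1"
    by (rule mult_mono) (use mpow_le_1[OF Q_stochastic] mpow_nonneg[OF Q_stochastic] assms in auto)
  then show ?thesis
    unfolding Amat_summand_def using K_pos[of "Suc t"]
    by (simp add: mult.assoc mult_left_le)
qed

lemma summable_Amat_summand: "b \<ge> 0 \<Longrightarrow> summable (Amat_summand b \<beta> h z y)"
  by (rule summable_comparison_test'[where g="\<lambda>t. K (Suc t) * exp (\<beta> * f y + h)"])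
     (use Amat_summand_le Amat_summand_nonneg summable_mult2[OF K_summable] in auto)

lemma Amat_pos:
  assumes "b \<ge> 0"
  shows "Amat K Q f b \<beta> h z y > 0"
proof -
  obtain t where "mpow Q (Suc t) z y > 0"
    using irreducible_mpow_Suc_pos[OF Q_stochastic Q_irreducible] by blast
  then have "Amat_summand b \<beta> h z y t > 0" unfolding Amat_summand_def using K_pos[of "Suc t"] by simp
  then show ?thesis unfolding Amat_eq_suminf
    by (intro suminf_pos2[OF summable_Amat_summand[OF assms]]) (auto intro: Amat_summand_nonneg)
qed

lemma Amat_nonneg: "b \<ge> 0 \<Longrightarrow> Amat K Q f b \<beta> h z y \<ge> 0"
  using Amat_pos[of b] by (simp add: less_imp_le)

lemma lam_eqI:
  assumes "b \<ge> 0" and "\<And>x. v x > 0" "\<And>x. (\<Sum>y\<in>UNIV. Amat K Q f b \<beta> h x y * v y) = r * v x"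
  shows "lam K Q f b \<beta> h = r"
  unfolding lam_def by (rule pf_eigenvalue_eqI[where v=v]) (use assms Amat_nonneg in auto)

lemma lam_pos_eigenvector:
  assumes b: "b \<ge> 0"
  obtains v where "\<And>x. v x > 0" "\<And>x. (\<Sum>y\<in>UNIV. Amat K Q f b \<beta> h x y * v y) = lam K Q f b \<beta> h * v x"
    and "lam K Q f b \<beta> h > 0"
proof -
  obtain r v where "r > 0" "\<And>x. v x > 0" "\<And>x. (\<Sum>y\<in>UNIV. Amat K Q f b \<beta> h x y * v y) = r * v x"
    using positive_matrix_pos_eigenvector[of "Amat K Q f b \<beta> h"] Amat_pos[OF b] by blast
  moreover from this have "lam K Q f b \<beta> h = r" by (intro lam_eqI[OF b])
  ultimately show ?thesis using that by auto
qed

lemma Amat_decay: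
  assumes "0 \<le> b" "b \<le> b'"
  shows "Amat K Q f b' \<beta> h z y \<le> exp (-(b' - b)) * Amat K Q f b \<beta> h z y"
proof -
  have "Amat_summand b' \<beta> h z y t \<le> exp (-(b' - b)) * Amat_summand b \<beta> h z y t" for t
  proof -
    have "(b' - b) * 1 \<le> (b' - b) * real (Suc t)" using assms by (intro mult_left_mono) auto
    then have "exp (-(b' - b) * real (Suc t)) \<le> exp (-(b' - b))" by (simp add: algebra_simps)
    then have "exp (- b' * real (Suc t)) \<le> exp (-(b' - b)) * exp (- b * real (Suc t))"
      by (simp add: exp_add[symmetric] algebra_simps)
    then have "K (Suc t) * mpow Q (Suc t) z y * exp (\<beta> * f y + h) * exp (- b' * real (Suc t))
       \<le> K (Suc t) * mpow Q (Suc t) z y * exp (\<beta> * f y + h) * (exp (-(b' - b)) * exp (- b * real (Suc t)))"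
      by (intro mult_left_mono) (use K_pos[of "Suc t"] mpow_nonneg[OF Q_stochastic] in auto)
    then show ?thesis unfolding Amat_summand_def by (simp add: mult_ac)
  qed
  then have "(\<Sum>t. Amat_summand b' \<beta> h z y t) \<le> (\<Sum>t. exp (-(b' - b)) * Amat_summand b \<beta> h z y t)"
    by (intro suminf_le) (use assms summable_Amat_summand summable_mult in auto)
  also have "\<dots> = exp (-(b' - b)) * (\<Sum>t. Amat_summand b \<beta> h z y t)"
    by (rule suminf_mult[OF summable_Amat_summand]) (use assms in auto)
  finally show ?thesis unfolding Amat_eq_suminf .
qed

lemma lam_decay:
  assumes "0 \<le> b" "b \<le> b'"
  shows "lam K Q f b' \<beta> h \<le> exp (-(b' - b)) * lam K Q f b \<beta> h"
proof -
  have b': "0 \<le> b'" using assms by simp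
  obtain v where v: "\<And>x. v x > 0" "\<And>x. (\<Sum>y\<in>UNIV. Amat K Q f b \<beta> h x y * v y) = lam K Q f b \<beta> h * v x"
    using lam_pos_eigenvector[OF assms(1)] by blast
  obtain w where w: "\<And>x. w x > 0" "\<And>x. (\<Sum>y\<in>UNIV. Amat K Q f b' \<beta> h x y * w y) = lam K Q f b' \<beta> h * w x"
    using lam_pos_eigenvector[OF b'] by blast
  show ?thesis
  proof (rule collatz_wielandt_upper[where M="Amat K Q f b' \<beta> h" and w=w and v=v])
    fix x
    have "(\<Sum>y\<in>UNIV. Amat K Q f b' \<beta> h x y * v y) \<le> (\<Sum>y\<in>UNIV. exp (-(b' - b)) * Amat K Q f b \<beta> h x y * v y)"
      by (intro sum_mono mult_right_mono Amat_decay assms) (use v(1) in \<open>auto intro: less_imp_le\<close>)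
    also have "\<dots> = exp (-(b' - b)) * lam K Q f b \<beta> h * v x"
      using v(2)[of x] by (simp add: sum_distrib_left[symmetric] mult.assoc)
    finally show "(\<Sum>y\<in>UNIV. Amat K Q f b' \<beta> h x y * v y) \<le> exp (-(b' - b)) * lam K Q f b \<beta> h * v x" .
  qed (use Amat_nonneg[OF b'] v w in auto)
qed

lemma lam_0_shift: "lam K Q f 0 \<beta> h = exp h * lam K Q f 0 \<beta> 0"
proof -
  have "Amat_summand 0 \<beta> h z y = (\<lambda>t. exp h * Amat_summand 0 \<beta> 0 z y t)" for z y
    unfolding Amat_summand_def by (rule ext) (simp add: exp_add mult_ac)
  then have A: "Amat K Q f 0 \<beta> h z y = exp h * Amat K Q f 0 \<beta> 0 z y" for z y
    unfolding Amat_eq_suminf by (simp add: suminf_mult[OF summable_Amat_summand])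
  obtain v where v: "\<And>x. v x > 0" "\<And>x. (\<Sum>y\<in>UNIV. Amat K Q f 0 \<beta> 0 x y * v y) = lam K Q f 0 \<beta> 0 * v x"
    using lam_pos_eigenvector[of 0] by blast
  show ?thesis
    by (rule lam_eqI[OF order_refl v(1)])
       (simp add: A v(2)[symmetric] sum_distrib_left mult.assoc)
qed

lemma continuous_on_Amat: "continuous_on {0..} (\<lambda>b. Amat K Q f b \<beta> h z y)"
proof -
  have "uniform_limit {0..} (\<lambda>n b. \<Sum>i<n. Amat_summand b \<beta> h z y i) (\<lambda>b. \<Sum>i. Amat_summand b \<beta> h z y i) sequentially"
    by (rule Weierstrass_m_test[where M="\<lambda>t. K (Suc t) * exp (\<beta> * f y + h)"])
       (use Amat_summand_le Amat_summand_nonneg summable_mult2[OF K_summable] in auto)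
  then have "continuous_on {0..} (\<lambda>b. \<Sum>i. Amat_summand b \<beta> h z y i)"
    by (rule uniform_limit_theorem[rotated])
       (auto simp: Amat_summand_def intro!: always_eventually continuous_intros)
  then show ?thesis unfolding Amat_eq_suminf .
qed

lemma continuous_on_lam: "continuous_on {0..} (\<lambda>b. lam K Q f b \<beta> h)"
  unfolding continuous_on
proof
  fix b0 :: real assume b0: "b0 \<in> {0..}"
  obtain v where v: "\<And>x. v x > 0" "\<And>x. (\<Sum>y\<in>UNIV. Amat K Q f b0 \<beta> h x y * v y) = lam K Q f b0 \<beta> h * v x"
    using lam_pos_eigenvector[of b0 \<beta> h] b0 by (metis atLeast_iff)
  define C where "C = (\<Sum>y\<in>UNIV. v y) / Min (range v)"
  have "Min (range v) \<in> range v" by (rule Min_in) auto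
  then have C: "C > 0" unfolding C_def using v(1) by (auto intro!: divide_pos_pos sum_pos)
  show "((\<lambda>b. lam K Q f b \<beta> h) \<longlongrightarrow> lam K Q f b0 \<beta> h) (at b0 within {0..})"
    unfolding tendsto_iff
  proof (intro allI impI)
    fix e :: real assume e: "e > 0"
    define \<eta> where "\<eta> = e / (2 * C)"
    have \<eta>: "\<eta> > 0" unfolding \<eta>_def using e C by simp
    have "\<forall>\<^sub>F b in at b0 within {0..}. \<forall>x y. dist (Amat K Q f b \<beta> h x y) (Amat K Q f b0 \<beta> h x y) < \<eta>"
    proof (intro eventually_all_finite)
      fix x y
      have "((\<lambda>b. Amat K Q f b \<beta> h x y) \<longlongrightarrow> Amat K Q f b0 \<beta> h x y) (at b0 within {0..})"
        using continuous_on_Amat[of \<beta> h x y] b0 unfolding continuous_on by blast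
      then show "\<forall>\<^sub>F b in at b0 within {0..}. dist (Amat K Q f b \<beta> h x y) (Amat K Q f b0 \<beta> h x y) < \<eta>"
        unfolding tendsto_iff using \<eta> by blast
    qed
    moreover have "\<forall>\<^sub>F b in at b0 within {0..}. b \<in> {0..}"
      by (auto simp: eventually_at_filter)
    ultimately show "\<forall>\<^sub>F b in at b0 within {0..}. dist (lam K Q f b \<beta> h) (lam K Q f b0 \<beta> h) < e"
    proof eventually_elim
      case (elim b)
      then have b: "b \<ge> 0" by simp
      obtain w where w: "\<And>x. w x > 0" "\<And>x. (\<Sum>y\<in>UNIV. Amat K Q f b \<beta> h x y * w y) = lam K Q f b \<beta> h * w x"
        using lam_pos_eigenvector[OF b] by blast
      have "\<bar>lam K Q f b \<beta> h - lam K Q f b0 \<beta> h\<bar> \<le> \<eta> * C"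
        unfolding C_def times_divide_eq_right
      proof (rule pos_eigenvalue_perturbation[where M="Amat K Q f b0 \<beta> h" and N="Amat K Q f b \<beta> h" and v=v and w=w])
        show "\<bar>Amat K Q f b \<beta> h x y - Amat K Q f b0 \<beta> h x y\<bar> \<le> \<eta>" for x y
          using elim(1) by (auto simp: dist_real_def intro: less_imp_le)
      qed (use v w Amat_nonneg b0 b in auto)
      also have "\<dots> < e" unfolding \<eta>_def using C e by simp
      finally show ?case by (simp add: dist_real_def)
    qed
  qed
qed

lemma lam_strict_decreasing:
  assumes "0 \<le> b" "b < b'"
  shows "lam K Q f b' \<beta> h < lam K Q f b \<beta> h"
proof -
  have "lam K Q f b \<beta> h > 0" using lam_pos_eigenvector[of b \<beta> h] assms(1) by auto
  moreover have "lam K Q f b' \<beta> h \<le> exp (-(b' - b)) * lam K Q f b \<beta> h"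
    by (rule lam_decay) (use assms in auto)
  moreover have "exp (-(b' - b)) < 1" using assms by simp
  ultimately show ?thesis by (smt (verit) mult_less_cancel_right2)
qed

lemma lam_eq_1_unique:
  assumes L: "lam K Q f 0 \<beta> h > 1"
  shows "\<exists>!b. b > 0 \<and> lam K Q f b \<beta> h = 1"
proof -
  define B where "B = ln (lam K Q f 0 \<beta> h) + 1"
  have B: "B \<ge> 0" unfolding B_def using L by simp
  have "lam K Q f B \<beta> h \<le> exp (-(B - 0)) * lam K Q f 0 \<beta> h" by (rule lam_decay) (use B in auto)
  also have "\<dots> = exp (-1)" unfolding B_def using L by (simp add: exp_diff exp_minus field_simps)
  finally have "lam K Q f B \<beta> h \<le> 1" by (smt (verit) exp_le_one_iff)
  moreover have "continuous_on {0..B} (\<lambda>b. lam K Q f b \<beta> h)"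
    by (rule continuous_on_subset[OF continuous_on_lam]) auto
  ultimately obtain b where b: "0 \<le> b" "b \<le> B" "lam K Q f b \<beta> h = 1"
    using IVT2'[where f="\<lambda>b. lam K Q f b \<beta> h" and a=0 and b=B and y=1] B L by auto
  then have "b > 0" using L by (cases "b = 0") auto
  moreover have "b' = b" if "b' > 0" "lam K Q f b' \<beta> h = 1" for b'
    using lam_strict_decreasing[of b' b \<beta> h] lam_strict_decreasing[of b b' \<beta> h] b that
    by (cases b' b rule: linorder_cases) auto
  ultimately show ?thesis using b by blast
qed

lemma Fa_localized:
  assumes "lam K Q f 0 \<beta> h > 1"
  shows "Fa K Q f \<beta> h > 0" "lam K Q f (Fa K Q f \<beta> h) \<beta> h = 1"
  using theI'[OF lam_eq_1_unique[OF assms]] assms unfolding Fa_def by auto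

lemma Fa_eq_0_iff: "Fa K Q f \<beta> h = 0 \<longleftrightarrow> lam K Q f 0 \<beta> h \<le> 1"
  using Fa_localized[of \<beta> h] unfolding Fa_def by auto

lemma Fa_nonneg: "Fa K Q f \<beta> h \<ge> 0"
  using Fa_localized[of \<beta> h] unfolding Fa_def by auto

lemma Sup_Fa_eq_0: "Sup {h. Fa K Q f \<beta> h = 0} = - ln (lam K Q f 0 \<beta> 0)"
proof -
  have L0: "lam K Q f 0 \<beta> 0 > 0" using lam_pos_eigenvector[of 0 \<beta> 0] by auto
  have "Fa K Q f \<beta> h = 0 \<longleftrightarrow> h \<le> - ln (lam K Q f 0 \<beta> 0)" for h
  proof -
    have "Fa K Q f \<beta> h = 0 \<longleftrightarrow> ln (exp h * lam K Q f 0 \<beta> 0) \<le> 0"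
      unfolding Fa_eq_0_iff lam_0_shift[of \<beta> h] using L0 by simp
    also have "\<dots> \<longleftrightarrow> h \<le> - ln (lam K Q f 0 \<beta> 0)" using L0 by (simp add: ln_mult) (smt (verit))
    finally show ?thesis .
  qed
  then have "{h. Fa K Q f \<beta> h = 0} = {..- ln (lam K Q f 0 \<beta> 0)}" by auto
  then show ?thesis by simp
qed

end

section \<open>Bounds on the annealed partition function\<close>

context annealed_pinning
begin

lemma EZ_end_nonneg: "EZ_end K Q \<mu> f \<beta> h N y \<ge> 0"
proof (induction N arbitrary: y rule: less_induct)
  case (less N)
  show ?case
  proof (cases N)
    case 0 then show ?thesis using \<mu>_invariant by (simp add: EZ_end_0 invariant_distribution_def)
  next
    case (Suc n)
    show ?thesis unfolding Suc EZ_end_Suc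
    proof (rule sum_nonneg, intro mult_nonneg_nonneg)
      fix m assume m: "m \<in> {..n}"
      show "0 \<le> K (Suc n - m)" using K_pos[of "Suc n - m"] m by (simp add: less_imp_le)
      show "0 \<le> (\<Sum>z\<in>UNIV. EZ_end K Q \<mu> f \<beta> h m z * mpow Q (Suc n - m) z y)"
        using less.IH[of m] m Suc by (intro sum_nonneg mult_nonneg_nonneg mpow_nonneg[OF Q_stochastic]) auto
    qed simp
  qed
qed

definition rew_min :: "real \<Rightarrow> real \<Rightarrow> real" where
  "rew_min \<beta> h = Min (range (\<lambda>y. exp (\<beta> * f y + h)))"

definition rew_max :: "real \<Rightarrow> real \<Rightarrow> real" where
  "rew_max \<beta> h = Max (range (\<lambda>y. exp (\<beta> * f y + h)))"

lemma rew_min_le: "rew_min \<beta> h \<le> exp (\<beta> * f y + h)"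
  unfolding rew_min_def by (rule Min_le) auto

lemma rew_max_ge: "exp (\<beta> * f y + h) \<le> rew_max \<beta> h"
  unfolding rew_max_def by (rule Max_ge) auto

lemma rew_min_pos: "rew_min \<beta> h > 0"
proof -
  have "rew_min \<beta> h \<in> range (\<lambda>y. exp (\<beta> * f y + h))" unfolding rew_min_def by (rule Min_in) auto
  then show ?thesis by auto
qed

lemma rew_max_pos: "rew_max \<beta> h > 0"
  using rew_max_ge[of \<beta> undefined h] exp_gt_zero[of "\<beta> * f undefined + h"] by linarith

text \<open>Keeping only the paths with a renewal at \<open>m\<close> and the next one at \<open>N\<close>.\<close>

lemma EZ_ge_K_EZ:
  assumes "m < N"
  shows "K (N - m) * rew_min \<beta> h * EZ K Q \<mu> f m \<beta> h \<le> EZ K Q \<mu> f N \<beta> h"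
proof -
  obtain n where N: "N = Suc n" using assms by (cases N) auto
  define U where "U m' y = (\<Sum>z\<in>UNIV. EZ_end K Q \<mu> f \<beta> h m' z * mpow Q (N - m') z y)" for m' y
  have U_nonneg: "U m' y \<ge> 0" for m' y
    unfolding U_def by (intro sum_nonneg mult_nonneg_nonneg EZ_end_nonneg mpow_nonneg[OF Q_stochastic])
  have K_nonneg: "K (N - m') \<ge> 0" if "m' \<le> n" for m'
    using K_pos[of "N - m'"] that N by (simp add: less_imp_le)
  have "(\<Sum>y\<in>UNIV. U m y) = EZ K Q \<mu> f m \<beta> h"
    unfolding U_def EZ_eq_sum_EZ_end
    by (subst sum.swap) (simp add: sum_distrib_left[symmetric] mpow_row_sum[OF Q_stochastic])
  then have "K (N - m) * rew_min \<beta> h * EZ K Q \<mu> f m \<beta> h = (\<Sum>y\<in>UNIV. K (N - m) * rew_min \<beta> h * U m y)"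
    by (simp add: sum_distrib_left[symmetric])
  also have "\<dots> \<le> (\<Sum>y\<in>UNIV. K (N - m) * U m y * exp (\<beta> * f y + h))"
  proof (rule sum_mono)
    fix y
    have "K (N - m) * U m y * rew_min \<beta> h \<le> K (N - m) * U m y * exp (\<beta> * f y + h)"
      using K_nonneg[of m] assms N U_nonneg[of m y] rew_min_le[of \<beta> h y]
      by (intro mult_left_mono mult_nonneg_nonneg) auto
    then show "K (N - m) * rew_min \<beta> h * U m y \<le> K (N - m) * U m y * exp (\<beta> * f y + h)"
      by (simp add: mult_ac)
  qed
  also have "\<dots> \<le> (\<Sum>y\<in>UNIV. \<Sum>m'\<le>n. K (N - m') * U m' y * exp (\<beta> * f y + h))"
    using assms N K_nonneg U_nonneg
    by (intro sum_mono member_le_sum) (auto intro!: mult_nonneg_nonneg)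
  also have "\<dots> = EZ K Q \<mu> f N \<beta> h"
    unfolding EZ_eq_sum_EZ_end N EZ_end_Suc U_def N ..
  finally show ?thesis .
qed

lemma EZ_0: "EZ K Q \<mu> f 0 \<beta> h = 1"
  using \<mu>_invariant unfolding EZ_eq_sum_EZ_end EZ_end_0 invariant_distribution_def by simp

lemma EZ_ge_K: "N \<ge> 1 \<Longrightarrow> K N * rew_min \<beta> h \<le> EZ K Q \<mu> f N \<beta> h"
  using EZ_ge_K_EZ[of 0 N \<beta> h] by (simp add: EZ_0)

lemma EZ_pos: "EZ K Q \<mu> f N \<beta> h > 0"
proof (cases "N = 0")
  case False
  then have "0 < K N * rew_min \<beta> h" using K_pos[of N] rew_min_pos[of \<beta> h] by simp
  also have "\<dots> \<le> EZ K Q \<mu> f N \<beta> h" using EZ_ge_K[of N] False by simp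
  finally show ?thesis .
qed (simp add: EZ_0)

end

text \<open>Tilting by \<open>e^{-bN}\<close> and testing against a positive eigenvector \<open>v\<close> of \<open>A(b, \<beta>, h)\<close>
  turns the matrix renewal equation into a scalar identity.\<close>

locale annealed_pinning_eigenvector = annealed_pinning K Q \<mu> f
  for K :: "nat \<Rightarrow> real" and Q :: "'x::finite \<Rightarrow> 'x \<Rightarrow> real" and \<mu> f +
  fixes \<beta> h b :: real and v :: "'x \<Rightarrow> real"
  assumes b_nonneg: "b \<ge> 0" and v_pos: "\<And>x. v x > 0"
    and v_eigen: "\<And>x. (\<Sum>y\<in>UNIV. Amat K Q f b \<beta> h x y * v y) = lam K Q f b \<beta> h * v x"
begin

definition tilted_end :: "nat \<Rightarrow> 'x \<Rightarrow> real" where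
  "tilted_end m z = EZ_end K Q \<mu> f \<beta> h m z * exp (- b * real m)"

definition Mv :: "nat \<Rightarrow> 'x \<Rightarrow> real" where
  "Mv t z = (\<Sum>y\<in>UNIV. K t * mpow Q t z y * exp (\<beta> * f y + h) * exp (- b * real t) * v y)"

definition Mv_tail :: "nat \<Rightarrow> 'x \<Rightarrow> real" where
  "Mv_tail k z = (\<Sum>j. Mv (k + j) z)"

text \<open>\<open>straddle N\<close> is the \<open>v\<close>-weighted tilted mass of the paths whose last renewal before
  \<open>N\<close> is at some \<open>m < N\<close>, the excursion from \<open>m\<close> being allowed to end anywhere after \<open>N\<close>.\<close>

definition straddle :: "nat \<Rightarrow> real" where
  "straddle N = (\<Sum>m<N. \<Sum>z\<in>UNIV. tilted_end m z * Mv_tail (N - m) z)"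

definition v_sum :: real where "v_sum = (\<Sum>y\<in>UNIV. v y)"
definition mu_v :: real where "mu_v = (\<Sum>z\<in>UNIV. \<mu> z * v z)"
definition v_min :: real where "v_min = Min (range v)"

lemma tilted_end_nonneg: "tilted_end m z \<ge> 0"
  unfolding tilted_end_def using EZ_end_nonneg by simp

lemma v_min_pos: "v_min > 0"
  using Min_in[of "range v"] v_pos unfolding v_min_def by auto

lemma v_min_le: "v_min \<le> v x"
  unfolding v_min_def by (rule Min_le) auto

lemma v_sum_pos: "v_sum > 0"
  unfolding v_sum_def using v_pos by (intro sum_pos) auto

lemma mu_v_pos: "mu_v > 0"
proof -
  have "(\<Sum>z\<in>UNIV. \<mu> z * v_min) \<le> mu_v" unfolding mu_v_def
    using \<mu>_invariant by (intro sum_mono mult_left_mono v_min_le) (auto simp: invariant_distribution_def)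
  moreover have "(\<Sum>z\<in>UNIV. \<mu> z * v_min) = v_min"
    using \<mu>_invariant by (simp add: sum_distrib_right[symmetric] invariant_distribution_def)
  ultimately show ?thesis using v_min_pos by simp
qed

lemma Mv_nonneg: "t \<ge> 1 \<Longrightarrow> Mv t z \<ge> 0"
  unfolding Mv_def using K_pos[of t] v_pos mpow_nonneg[OF Q_stochastic]
  by (intro sum_nonneg mult_nonneg_nonneg) (auto intro: less_imp_le)

lemma Mv_le:
  assumes t: "t \<ge> 1"
  shows "Mv t z \<le> K t * rew_max \<beta> h * v_sum * exp (- b * real t)"
proof -
  have "Mv t z \<le> (\<Sum>y\<in>UNIV. K t * rew_max \<beta> h * exp (- b * real t) * v y)"
    unfolding Mv_def
  proof (rule sum_mono)
    fix y
    have "K t * mpow Q t z y * exp (\<beta> * f y + h) \<le> K t * 1 * rew_max \<beta> h"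
      using K_pos[OF t] mpow_le_1[OF Q_stochastic] mpow_nonneg[OF Q_stochastic] rew_max_ge
      by (intro mult_mono) auto
    then show "K t * mpow Q t z y * exp (\<beta> * f y + h) * exp (- b * real t) * v y
        \<le> K t * rew_max \<beta> h * exp (- b * real t) * v y"
      using v_pos[of y] by (intro mult_right_mono) auto
  qed
  also have "\<dots> = K t * rew_max \<beta> h * v_sum * exp (- b * real t)"
    unfolding v_sum_def sum_distrib_left sum_distrib_right by (simp add: mult_ac)
  finally show ?thesis .
qed

lemma summable_Mv_tail:
  assumes k: "k \<ge> 1"
  shows "summable (\<lambda>j. Mv (k + j) z)"
proof -
  have "summable (\<lambda>j. K (Suc (j + (k - 1))))"
    using summable_ignore_initial_segment[OF K_summable, of "k - 1"] by simp
  then have K_tail_summable: "summable (\<lambda>j. K (k + j) * (rew_max \<beta> h * v_sum))"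
    using k by (intro summable_mult2) (simp add: add.commute)
  have "Mv (k + j) z \<le> K (k + j) * (rew_max \<beta> h * v_sum)" for j
  proof -
    have "K (k + j) * rew_max \<beta> h * v_sum * exp (- b * real (k + j)) \<le> K (k + j) * rew_max \<beta> h * v_sum"
      using b_nonneg K_pos[of "k + j"] k rew_max_pos[of \<beta> h] v_sum_pos by (intro mult_left_le) auto
    then show ?thesis using Mv_le[of "k + j" z] k by (simp add: mult.assoc)
  qed
  then show ?thesis
    by (intro summable_comparison_test'[OF K_tail_summable]) (use Mv_nonneg k in auto)
qed

lemma Mv_tail_nonneg: "k \<ge> 1 \<Longrightarrow> Mv_tail k z \<ge> 0"
  unfolding Mv_tail_def by (intro suminf_nonneg summable_Mv_tail) (auto intro: Mv_nonneg)

lemma Mv_tail_step: "k \<ge> 1 \<Longrightarrow> Mv_tail k z = Mv k z + Mv_tail (Suc k) z"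
  using suminf_split_head[OF summable_Mv_tail, of k z] unfolding Mv_tail_def by simp

lemma Mv_tail_1: "Mv_tail (Suc 0) z = lam K Q f b \<beta> h * v z"
proof -
  have Mv: "Mv (Suc 0 + j) z = (\<Sum>y\<in>UNIV. Amat_summand b \<beta> h z y j * v y)" for j
    unfolding Mv_def Amat_summand_def by simp
  have "Mv_tail (Suc 0) z = (\<Sum>y\<in>UNIV. \<Sum>j. Amat_summand b \<beta> h z y j * v y)"
    unfolding Mv_tail_def Mv by (rule suminf_sum) (intro summable_mult2 summable_Amat_summand b_nonneg)
  also have "\<dots> = (\<Sum>y\<in>UNIV. Amat K Q f b \<beta> h z y * v y)"
    unfolding Amat_eq_suminf by (intro sum.cong refl suminf_mult2[symmetric] summable_Amat_summand b_nonneg)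
  finally show ?thesis using v_eigen by simp
qed

lemma EZ_end_v_renewal:
  assumes "N \<ge> 1"
  shows "(\<Sum>y\<in>UNIV. tilted_end N y * v y) = (\<Sum>m<N. \<Sum>z\<in>UNIV. tilted_end m z * Mv (N - m) z)"
proof -
  obtain n where n: "N = Suc n" using assms by (cases N) auto
  define T where "T m z y = tilted_end m z * (K (N - m) * mpow Q (N - m) z y * exp (\<beta> * f y + h)
    * exp (- b * real (N - m)) * v y)" for m z y
  have exp_split: "exp (- b * real N) = exp (- b * real m) * exp (- b * real (N - m))" if "m \<le> N" for m
    using that by (simp add: exp_add[symmetric] of_nat_diff algebra_simps)
  have "(\<Sum>y\<in>UNIV. tilted_end N y * v y) = (\<Sum>y\<in>UNIV. \<Sum>m<N. \<Sum>z\<in>UNIV. T m z y)"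
  proof (rule sum.cong[OF refl])
    fix y
    have "tilted_end N y * v y = (\<Sum>m<N. K (N - m) * (\<Sum>z\<in>UNIV. EZ_end K Q \<mu> f \<beta> h m z * mpow Q (N - m) z y)
        * exp (\<beta> * f y + h)) * exp (- b * real N) * v y"
      unfolding tilted_end_def n EZ_end_Suc lessThan_Suc_atMost ..
    also have "\<dots> = (\<Sum>m<N. \<Sum>z\<in>UNIV. T m z y)"
      unfolding sum_distrib_right
    proof (rule sum.cong[OF refl])
      fix m assume "m \<in> {..<N}"
      then have "m \<le> N" by simp
      then show "K (N - m) * (\<Sum>z\<in>UNIV. EZ_end K Q \<mu> f \<beta> h m z * mpow Q (N - m) z y) * exp (\<beta> * f y + h)
          * exp (- b * real N) * v y = (\<Sum>z\<in>UNIV. T m z y)"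
        unfolding T_def tilted_end_def exp_split[OF \<open>m \<le> N\<close>] by (simp add: sum_distrib_left sum_distrib_right mult_ac)
    qed
    finally show "tilted_end N y * v y = (\<Sum>m<N. \<Sum>z\<in>UNIV. T m z y)" .
  qed
  also have "\<dots> = (\<Sum>m<N. \<Sum>y\<in>UNIV. \<Sum>z\<in>UNIV. T m z y)" by (rule sum.swap)
  also have "\<dots> = (\<Sum>m<N. \<Sum>z\<in>UNIV. \<Sum>y\<in>UNIV. T m z y)" by (intro sum.cong refl sum.swap)
  also have "\<dots> = (\<Sum>m<N. \<Sum>z\<in>UNIV. tilted_end m z * Mv (N - m) z)"
    unfolding T_def Mv_def by (simp add: sum_distrib_left)
  finally show ?thesis .
qed

lemma straddle_Suc:
  assumes N: "N \<ge> 1"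
  shows "straddle (Suc N) = straddle N + (lam K Q f b \<beta> h - 1) * (\<Sum>z\<in>UNIV. tilted_end N z * v z)"
proof -
  have "straddle N = (\<Sum>m<N. \<Sum>z\<in>UNIV. tilted_end m z * Mv (N - m) z)
      + (\<Sum>m<N. \<Sum>z\<in>UNIV. tilted_end m z * Mv_tail (Suc N - m) z)"
    unfolding straddle_def sum.distrib[symmetric]
  proof (intro sum.cong refl)
    fix m z assume "m \<in> {..<N}"
    then have "N - m \<ge> 1" "Suc (N - m) = Suc N - m" by auto
    then show "tilted_end m z * Mv_tail (N - m) z = tilted_end m z * Mv (N - m) z + tilted_end m z * Mv_tail (Suc N - m) z"
      using Mv_tail_step[of "N - m" z] by (simp add: distrib_left)
  qed
  moreover have "straddle (Suc N) = (\<Sum>m<N. \<Sum>z\<in>UNIV. tilted_end m z * Mv_tail (Suc N - m) z)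
      + lam K Q f b \<beta> h * (\<Sum>z\<in>UNIV. tilted_end N z * v z)"
    unfolding straddle_def by (simp add: Mv_tail_1 sum_distrib_left mult_ac)
  ultimately show ?thesis unfolding EZ_end_v_renewal[OF N, symmetric] by (simp add: algebra_simps)
qed

lemma straddle_eq:
  "N \<ge> 1 \<Longrightarrow> straddle N = mu_v + (lam K Q f b \<beta> h - 1) * (\<Sum>n<N. \<Sum>z\<in>UNIV. tilted_end n z * v z)"
proof (induction N rule: dec_induct)
  case base
  have "straddle 1 = lam K Q f b \<beta> h * mu_v"
    unfolding straddle_def mu_v_def by (simp add: Mv_tail_1 tilted_end_def EZ_end_0 sum_distrib_left mult_ac)
  moreover have "(\<Sum>n<1. \<Sum>z\<in>UNIV. tilted_end n z * v z) = mu_v"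
    unfolding mu_v_def tilted_end_def by (simp add: EZ_end_0)
  ultimately show ?case by (simp add: algebra_simps)
next
  case (step N)
  then show ?case using straddle_Suc[of N] by (simp add: algebra_simps)
qed

lemma straddle_ge: "lam K Q f b \<beta> h * (\<Sum>z\<in>UNIV. tilted_end N z * v z) \<le> straddle (Suc N)"
proof -
  have "(\<Sum>z\<in>UNIV. tilted_end N z * Mv_tail (Suc N - N) z) \<le> straddle (Suc N)"
    unfolding straddle_def
    by (rule member_le_sum[of N, where f="\<lambda>m. \<Sum>z\<in>UNIV. tilted_end m z * Mv_tail (Suc N - m) z"])
       (auto intro!: sum_nonneg mult_nonneg_nonneg tilted_end_nonneg Mv_tail_nonneg)
  then show ?thesis by (simp add: Mv_tail_1 sum_distrib_left mult_ac)
qed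

lemma tilted_end_v_le:
  assumes "lam K Q f b \<beta> h \<le> 1"
  shows "lam K Q f b \<beta> h * (\<Sum>z\<in>UNIV. tilted_end N z * v z) \<le> mu_v"
proof -
  have "(\<Sum>n<Suc N. \<Sum>z\<in>UNIV. tilted_end n z * v z) \<ge> 0"
    using v_pos by (intro sum_nonneg mult_nonneg_nonneg tilted_end_nonneg) (auto intro: less_imp_le)
  then have "straddle (Suc N) \<le> mu_v"
    using straddle_eq[of "Suc N"] assms by (simp add: mult_nonpos_nonneg)
  then show ?thesis using straddle_ge[of N] by simp
qed

lemma EZ_eq_tilted: "EZ K Q \<mu> f N \<beta> h = exp (b * real N) * (\<Sum>z\<in>UNIV. tilted_end N z)"
  unfolding EZ_eq_sum_EZ_end tilted_end_def
  by (simp add: sum_distrib_left sum_distrib_right mult_ac exp_minus field_simps)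

lemma sum_tilted_end_le: "(\<Sum>z\<in>UNIV. tilted_end N z) \<le> (\<Sum>z\<in>UNIV. tilted_end N z * v z) / v_min"
proof -
  have "(\<Sum>z\<in>UNIV. tilted_end N z) * v_min \<le> (\<Sum>z\<in>UNIV. tilted_end N z * v z)"
    unfolding sum_distrib_right by (intro sum_mono mult_left_mono v_min_le tilted_end_nonneg)
  then show ?thesis using v_min_pos by (simp add: le_divide_eq)
qed

lemma EZ_upper:
  assumes "lam K Q f b \<beta> h \<le> 1"
  shows "EZ K Q \<mu> f N \<beta> h \<le> exp (b * real N) * (mu_v / (lam K Q f b \<beta> h * v_min))"
proof -
  have lam: "lam K Q f b \<beta> h > 0" using lam_pos_eigenvector[of b \<beta> h] b_nonneg by metis
  have "(\<Sum>z\<in>UNIV. tilted_end N z) \<le> (\<Sum>z\<in>UNIV. tilted_end N z * v z) / v_min"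
    by (rule sum_tilted_end_le)
  also have "\<dots> \<le> (mu_v / lam K Q f b \<beta> h) / v_min"
    using tilted_end_v_le[OF assms, of N] lam v_min_pos
    by (intro divide_right_mono) (auto simp: le_divide_eq mult.commute)
  finally have "(\<Sum>z\<in>UNIV. tilted_end N z) \<le> mu_v / (lam K Q f b \<beta> h * v_min)" by simp
  then show ?thesis unfolding EZ_eq_tilted by (rule mult_left_mono) simp
qed

definition q :: real where "q = exp (- b)"

definition tilted_mass :: "nat \<Rightarrow> real" where
  "tilted_mass m = (\<Sum>z\<in>UNIV. tilted_end m z)"

definition discounted_mass :: "nat \<Rightarrow> real" where
  "discounted_mass N = (\<Sum>m<N. tilted_mass m * q ^ (N - m))"

definition tail_const :: real where "tail_const = rew_max \<beta> h * v_sum / (1 - q)"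

lemma q_bounds: "b > 0 \<Longrightarrow> 0 < q \<and> q < 1"
  unfolding q_def by simp

lemma exp_eq_q_power: "exp (- b * real t) = q ^ t"
  unfolding q_def by (simp add: exp_of_nat_mult[symmetric] mult.commute)

lemma Mv_tail_le:
  assumes b: "b > 0" and k: "k \<ge> 1"
  shows "Mv_tail k z \<le> tail_const * q ^ k"
proof -
  have q: "0 < q" "q < 1" using q_bounds[OF b] by auto
  have Mv_geometric: "Mv t z \<le> rew_max \<beta> h * v_sum * q ^ k * q ^ j" if "t = k + j" for t j
  proof -
    have "Mv t z \<le> K t * (rew_max \<beta> h * v_sum * q ^ t)"
      using Mv_le[of t z] that k unfolding exp_eq_q_power by (simp add: mult_ac)
    also have "\<dots> \<le> 1 * (rew_max \<beta> h * v_sum * q ^ t)"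
      using K_le_1[of t] that k q rew_max_pos[of \<beta> h] v_sum_pos by (intro mult_right_mono) auto
    finally show ?thesis using that by (simp add: power_add mult_ac)
  qed
  have geometric: "summable (\<lambda>j. rew_max \<beta> h * v_sum * q ^ k * q ^ j)"
    using q by (intro summable_mult summable_geometric) simp
  have "Mv_tail k z \<le> (\<Sum>j. rew_max \<beta> h * v_sum * q ^ k * q ^ j)"
    unfolding Mv_tail_def by (rule suminf_le[OF _ summable_Mv_tail[OF k] geometric]) (use Mv_geometric in auto)
  also have "\<dots> = tail_const * q ^ k"
    unfolding tail_const_def using q by (simp add: suminf_mult suminf_geometric summable_geometric)
  finally show ?thesis .
qed

lemma straddle_le: "b > 0 \<Longrightarrow> straddle N \<le> tail_const * discounted_mass N"
proof -
  assume b: "b > 0"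
  have "straddle N \<le> (\<Sum>m<N. \<Sum>z\<in>UNIV. tilted_end m z * (tail_const * q ^ (N - m)))"
    unfolding straddle_def by (intro sum_mono mult_left_mono Mv_tail_le b tilted_end_nonneg) auto
  also have "\<dots> = tail_const * discounted_mass N"
    unfolding discounted_mass_def tilted_mass_def by (simp add: sum_distrib_left sum_distrib_right mult_ac)
  finally show ?thesis .
qed

lemma discounted_mass_Suc: "discounted_mass (Suc N) = q * (discounted_mass N + tilted_mass N)"
proof -
  have "(\<Sum>m<N. tilted_mass m * q ^ (Suc N - m)) = q * discounted_mass N"
    unfolding discounted_mass_def sum_distrib_left by (intro sum.cong refl) (auto simp: Suc_diff_le)
  then show ?thesis unfolding discounted_mass_def by (simp add: algebra_simps)
qed

definition mass_bound :: real where "mass_bound = mu_v / v_min"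
definition discounted_bound :: real where "discounted_bound = q * mass_bound / (1 - q)"
definition discounted_floor :: real where "discounted_floor = mu_v / tail_const"

context
  assumes b_pos: "b > 0" and lam_eq_1: "lam K Q f b \<beta> h = 1"
begin

lemma q_pos: "0 < q" and q_less_1: "q < 1"
  using q_bounds[OF b_pos] by auto

lemma tail_const_pos: "tail_const > 0"
  unfolding tail_const_def using rew_max_pos[of \<beta> h] v_sum_pos q_less_1 by simp

lemma discounted_floor_pos: "discounted_floor > 0"
  unfolding discounted_floor_def using mu_v_pos tail_const_pos by simp

lemma tilted_mass_le: "tilted_mass m \<le> mass_bound"
proof -
  have "tilted_mass m \<le> (\<Sum>z\<in>UNIV. tilted_end m z * v z) / v_min"
    unfolding tilted_mass_def by (rule sum_tilted_end_le)
  also have "\<dots> \<le> mass_bound"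
    unfolding mass_bound_def using tilted_end_v_le[of m] lam_eq_1 v_min_pos by (simp add: divide_right_mono)
  finally show ?thesis .
qed

lemma discounted_mass_le: "discounted_mass N \<le> discounted_bound"
proof (induction N)
  case 0
  then show ?case
    unfolding discounted_mass_def discounted_bound_def mass_bound_def
    using q_pos q_less_1 mu_v_pos v_min_pos by simp
next
  case (Suc N)
  have "discounted_mass (Suc N) \<le> q * (discounted_bound + mass_bound)"
    unfolding discounted_mass_Suc using Suc tilted_mass_le[of N] q_pos by (intro mult_left_mono) auto
  also have "\<dots> = discounted_bound" unfolding discounted_bound_def using q_less_1 by (simp add: field_simps)
  finally show ?case .
qed

lemma discounted_mass_ge: "N \<ge> 1 \<Longrightarrow> discounted_floor \<le> discounted_mass N"
  using straddle_eq[of N] straddle_le[OF b_pos, of N] lam_eq_1 tail_const_pos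
  unfolding discounted_floor_def by (simp add: divide_le_eq mult.commute)

text \<open>The discounted mass at time \<open>M + T\<close> is at least \<open>discounted_floor\<close>, but would be
  smaller if all tilted masses in the window \<open>[M, M + T)\<close> were below \<open>c\<close>.\<close>

lemma tilted_mass_window:
  assumes c: "c > 0" "c * q / (1 - q) \<le> discounted_floor / 4"
    and T: "T \<ge> 1" "q ^ T * discounted_bound \<le> discounted_floor / 4"
  shows "\<exists>j<T. c \<le> tilted_mass (M + j)"
proof (rule ccontr)
  assume "\<not> ?thesis"
  then have small: "\<And>j. j < T \<Longrightarrow> tilted_mass (M + j) < c" by (meson not_le)
  have "j \<le> T \<longrightarrow> discounted_mass (M + j) \<le> q ^ j * discounted_bound + c * q / (1 - q)" for j
  proof (induction j)
    case 0
    have "c * q / (1 - q) \<ge> 0" using c(1) q_pos q_less_1 by simp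
    then show ?case using discounted_mass_le[of M] by simp
  next
    case (Suc j)
    show ?case
    proof
      assume j: "Suc j \<le> T"
      have "discounted_mass (M + Suc j) \<le> q * ((q ^ j * discounted_bound + c * q / (1 - q)) + c)"
        unfolding add_Suc_right discounted_mass_Suc using Suc j small[of j] q_pos
        by (intro mult_left_mono add_mono) auto
      also have "\<dots> = q ^ Suc j * discounted_bound + c * q / (1 - q)"
        using q_less_1 by (simp add: field_simps)
      finally show "discounted_mass (M + Suc j) \<le> q ^ Suc j * discounted_bound + c * q / (1 - q)" .
    qed
  qed
  then have "discounted_mass (M + T) \<le> q ^ T * discounted_bound + c * q / (1 - q)" by blast
  then have "discounted_mass (M + T) \<le> discounted_floor / 2" using c(2) T(2) by linarith
  then show False using discounted_mass_ge[of "M + T"] T(1) discounted_floor_pos by simp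
qed

lemma EZ_lower: "\<exists>c>0. \<forall>\<^sub>F N in sequentially. c * exp (b * real N) \<le> EZ K Q \<mu> f N \<beta> h"
proof -
  define c where "c = discounted_floor * (1 - q) / (4 * q)"
  have c: "c > 0" "c * q / (1 - q) \<le> discounted_floor / 4"
    unfolding c_def using q_pos q_less_1 discounted_floor_pos by (auto simp: field_simps)
  have "(\<lambda>n. q ^ n * discounted_bound) \<longlonglongrightarrow> 0 * discounted_bound"
    using q_pos q_less_1 by (intro tendsto_mult tendsto_const LIMSEQ_power_zero) simp
  then have "\<forall>\<^sub>F n in sequentially. q ^ n * discounted_bound < discounted_floor / 4"
    using discounted_floor_pos by (intro order_tendstoD) auto
  then obtain T0 where T0: "\<And>n. n \<ge> T0 \<Longrightarrow> q ^ n * discounted_bound < discounted_floor / 4"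
    unfolding eventually_sequentially by blast
  define T where "T = Suc T0"
  have T: "T \<ge> 1" "q ^ T * discounted_bound \<le> discounted_floor / 4" using T0[of T] unfolding T_def by auto
  define \<kappa> where "\<kappa> = Min (K ` {1..T})"
  have "\<kappa> \<in> K ` {1..T}" unfolding \<kappa>_def by (rule Min_in) (use T in auto)
  then have \<kappa>: "\<kappa> > 0" using K_pos by auto
  have \<kappa>_le: "\<kappa> \<le> K k" if "k \<in> {1..T}" for k unfolding \<kappa>_def by (rule Min_le) (use that in auto)
  define c1 where "c1 = \<kappa> * rew_min \<beta> h * c * exp (- b * real T)"
  have "c1 * exp (b * real N) \<le> EZ K Q \<mu> f N \<beta> h" if NT: "N \<ge> T" for N
  proof -
    obtain j where j: "j < T" "c \<le> tilted_mass (N - T + j)" using tilted_mass_window[OF c T] by blast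
    define m where "m = N - T + j"
    have m: "m < N" "N - m \<in> {1..T}" "N \<le> T + m" unfolding m_def using j NT by auto
    have "real N \<le> real T + real m" using m(3) by linarith
    then have "b * real N \<le> b * (real T + real m)" using b_pos by (intro mult_left_mono) auto
    then have "exp (b * real N) * exp (- b * real T) \<le> exp (b * real m)"
      by (simp add: exp_add[symmetric] algebra_simps)
    then have "c1 * exp (b * real N) \<le> \<kappa> * rew_min \<beta> h * (exp (b * real m) * c)"
      unfolding c1_def using \<kappa> rew_min_pos[of \<beta> h] c by (simp add: mult_ac mult_left_mono)
    also have "\<dots> \<le> K (N - m) * rew_min \<beta> h * EZ K Q \<mu> f m \<beta> h"
    proof (intro mult_mono)
      show "exp (b * real m) * c \<le> EZ K Q \<mu> f m \<beta> h"
        using j(2) unfolding EZ_eq_tilted tilted_mass_def m_def by simp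
    qed (use \<kappa>_le[OF m(2)] \<kappa> rew_min_pos[of \<beta> h] EZ_pos[of m \<beta> h] c(1) in auto)
    also have "\<dots> \<le> EZ K Q \<mu> f N \<beta> h" by (rule EZ_ge_K_EZ[OF m(1)])
    finally show ?thesis .
  qed
  moreover have "c1 > 0" unfolding c1_def using \<kappa> rew_min_pos c by simp
  ultimately show ?thesis unfolding eventually_sequentially by blast
qed

end

end

section \<open>The annealed free energy\<close>

lemma ge_inverse_of_halving:
  fixes L :: "nat \<Rightarrow> real"
  assumes L_pos: "\<forall>n. L n > 0" and halving: "\<And>n. n \<ge> N0 \<Longrightarrow> L (n div 2) \<le> 2 * L n"
  obtains a where "a > 0" "\<And>n. n \<ge> 1 \<Longrightarrow> a / real n \<le> L n"
proof -
  define N1 where "N1 = max N0 2"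
  define a where "a = Min ((\<lambda>k. real k * L k) ` {1..N1})"
  have "a \<in> (\<lambda>k. real k * L k) ` {1..N1}" unfolding a_def by (rule Min_in) (auto simp: N1_def)
  then have a: "a > 0" using L_pos by auto
  have a_le: "a \<le> real k * L k" if "k \<in> {1..N1}" for k unfolding a_def by (rule Min_le) (use that in auto)
  have "n \<ge> 1 \<longrightarrow> a / real n \<le> L n" for n
  proof (induction n rule: less_induct)
    case (less n)
    show ?case
    proof
      assume n: "n \<ge> 1"
      show "a / real n \<le> L n"
      proof (cases "n \<le> N1")
        case True
        then show ?thesis using a_le[of n] n by (simp add: divide_le_eq mult.commute)
      next
        case False
        then have n_large: "n \<ge> N0" "n div 2 \<ge> 1" "n div 2 < n" unfolding N1_def by auto
        have "real (2 * (n div 2)) \<le> real n" by simp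
        then have "a / real n \<le> (a / real (n div 2)) / 2"
          using a n_large by (simp add: divide_left_mono)
        also have "\<dots> \<le> L (n div 2) / 2" using less.IH[of "n div 2"] n_large by simp
        also have "\<dots> \<le> L n" using halving[OF n_large(1)] by simp
        finally show ?thesis .
      qed
    qed
  qed
  then show ?thesis using that a by blast
qed

lemma slowly_varying_ge_inverse:
  fixes L :: "nat \<Rightarrow> real"
  assumes L_pos: "\<forall>n. L n > 0" and "slowly_varying L"
  obtains a where "a > 0" "\<And>n. n \<ge> 1 \<Longrightarrow> a / real n \<le> L n"
proof -
  have "nat \<lfloor>1 / 2 * real n\<rfloor> = n div 2" for n
  proof -
    have "\<lfloor>real n / real (2::nat)\<rfloor> = int (n div 2)" by (rule floor_divide_of_nat_eq)
    then show ?thesis by simp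
  qed
  moreover have "((\<lambda>n. L (nat \<lfloor>1 / 2 * real n\<rfloor>) / L n) \<longlongrightarrow> 1) sequentially"
    using assms(2) unfolding slowly_varying_def by (simp del: times_divide_eq_left)
  ultimately have "((\<lambda>n. L (n div 2) / L n) \<longlongrightarrow> 1) sequentially" by simp
  then have "\<forall>\<^sub>F n in sequentially. L (n div 2) / L n < 2"
    by (rule order_tendstoD) simp
  then obtain N0 where N0: "\<And>n. n \<ge> N0 \<Longrightarrow> L (n div 2) / L n < 2"
    unfolding eventually_sequentially by blast
  have "L (n div 2) \<le> 2 * L n" if "n \<ge> N0" for n
    using N0[OF that] L_pos[rule_format, of n] by (simp add: divide_less_eq)
  then show ?thesis using ge_inverse_of_halving[OF L_pos] that by blast
qed

lemma ln_over_n_tendsto: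
  fixes E :: "nat \<Rightarrow> real"
  assumes lower: "\<forall>\<^sub>F N in sequentially. c1 * exp (b * real N) * real N powr (- p) \<le> E N"
    and upper: "\<forall>\<^sub>F N in sequentially. E N \<le> exp (b * real N) * c2"
    and c1: "c1 > 0"
  shows "(\<lambda>N. ln (E N) / real N) \<longlonglongrightarrow> b"
proof -
  obtain N0 where N0: "\<And>N. N \<ge> N0 \<Longrightarrow> c1 * exp (b * real N) * real N powr (- p) \<le> E N \<and> E N \<le> exp (b * real N) * c2"
    using eventually_conj[OF lower upper] unfolding eventually_sequentially by blast
  have c2: "c2 > 0"
  proof -
    have "0 < c1 * exp (b * real (Suc N0)) * real (Suc N0) powr (- p)" using c1 by simp
    then have "0 < exp (b * real (Suc N0)) * c2" using N0[of "Suc N0"] by linarith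
    then show ?thesis by (simp add: zero_less_mult_iff)
  qed
  have bounds: "b + ln c1 / real N - p * (ln (real N) / real N) \<le> ln (E N) / real N \<and>
      ln (E N) / real N \<le> b + ln c2 / real N" if N: "N \<ge> Suc N0" for N
  proof -
    have N_pos: "real N > 0" using N by simp
    have E_pos: "0 < c1 * exp (b * real N) * real N powr (- p)" using c1 N_pos by simp
    have "ln (c1 * exp (b * real N) * real N powr (- p)) \<le> ln (E N)"
      using N0[of N] N E_pos by (subst ln_le_cancel_iff) auto
    then have "(ln c1 + b * real N - p * ln (real N)) / real N \<le> ln (E N) / real N"
      using c1 N_pos by (intro divide_right_mono) (auto simp: ln_mult ln_powr)
    moreover have "ln (E N) \<le> ln (exp (b * real N) * c2)"
      using N0[of N] N E_pos c2 by (subst ln_le_cancel_iff) auto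
    then have "ln (E N) / real N \<le> (b * real N + ln c2) / real N"
      using c2 N_pos by (intro divide_right_mono) (auto simp: ln_mult)
    moreover have "(ln c1 + b * real N - p * ln (real N)) / real N = b + ln c1 / real N - p * (ln (real N) / real N)"
      "(b * real N + ln c2) / real N = b + ln c2 / real N"
      using N_pos by (simp_all add: field_simps)
    ultimately show ?thesis by simp
  qed
  show ?thesis
  proof (rule tendsto_sandwich)
    show "\<forall>\<^sub>F N in sequentially. b + ln c1 / real N - p * (ln (real N) / real N) \<le> ln (E N) / real N"
      "\<forall>\<^sub>F N in sequentially. ln (E N) / real N \<le> b + ln c2 / real N"
      using bounds unfolding eventually_sequentially by blast+
    show "(\<lambda>N. b + ln c1 / real N - p * (ln (real N) / real N)) \<longlonglongrightarrow> b"
      using tendsto_add[OF tendsto_const lim_const_over_n[of "ln c1"], of b]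
        tendsto_mult[OF tendsto_const lim_ln_over_n, of p]
      by (intro tendsto_eq_intros) auto
    show "(\<lambda>N. b + ln c2 / real N) \<longlonglongrightarrow> b"
      using tendsto_add[OF tendsto_const lim_const_over_n[of "ln c2"], of b] by simp
  qed
qed

context annealed_pinning
begin

lemma free_energy_localized:
  assumes "lam K Q f 0 \<beta> h > 1"
  shows "(\<lambda>N. ln (EZ K Q \<mu> f N \<beta> h) / real N) \<longlonglongrightarrow> Fa K Q f \<beta> h"
proof -
  define b where "b = Fa K Q f \<beta> h"
  have b: "b > 0" "lam K Q f b \<beta> h = 1" using Fa_localized[OF assms] unfolding b_def by auto
  obtain v where "\<And>x. v x > 0" "\<And>x. (\<Sum>y\<in>UNIV. Amat K Q f b \<beta> h x y * v y) = lam K Q f b \<beta> h * v x"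
    using lam_pos_eigenvector[of b \<beta> h] b by auto
  then interpret E: annealed_pinning_eigenvector K Q \<mu> f \<beta> h b v
    by unfold_locales (use b in auto)
  obtain c1 where c1: "c1 > 0" "\<forall>\<^sub>F N in sequentially. c1 * exp (b * real N) \<le> EZ K Q \<mu> f N \<beta> h"
    using E.EZ_lower[OF b] by blast
  have "\<forall>\<^sub>F N in sequentially. c1 * exp (b * real N) * real N powr (- 0) \<le> EZ K Q \<mu> f N \<beta> h"
    using eventually_conj[OF c1(2) eventually_gt_at_top[of 0]] by eventually_elim simp
  moreover have "\<forall>\<^sub>F N in sequentially.
      EZ K Q \<mu> f N \<beta> h \<le> exp (b * real N) * (E.mu_v / (lam K Q f b \<beta> h * E.v_min))"
    using E.EZ_upper b by simp
  ultimately show ?thesis unfolding b_def[symmetric] by (rule ln_over_n_tendsto[OF _ _ c1(1)])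
qed

text \<open>Here the upper bound comes from the eigenvector at \<open>b = 0\<close>, while the lower bound
  \<open>\<EE>Z_N \<ge> K(N) min e^{\<beta>f+h}\<close> only decays polynomially.\<close>

lemma free_energy_delocalized:
  assumes "lam K Q f 0 \<beta> h \<le> 1" and "c > 0" and K_lower: "\<And>n. n \<ge> 1 \<Longrightarrow> c * real n powr (- p) \<le> K n"
  shows "(\<lambda>N. ln (EZ K Q \<mu> f N \<beta> h) / real N) \<longlonglongrightarrow> Fa K Q f \<beta> h"
proof -
  obtain v where v: "\<And>x. v x > 0" "\<And>x. (\<Sum>y\<in>UNIV. Amat K Q f 0 \<beta> h x y * v y) = lam K Q f 0 \<beta> h * v x"
    using lam_pos_eigenvector[OF order_refl, of \<beta> h] by blast
  interpret E: annealed_pinning_eigenvector K Q \<mu> f \<beta> h 0 v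
    by unfold_locales (use v in auto)
  have "\<forall>\<^sub>F N in sequentially. c * rew_min \<beta> h * exp (0 * real N) * real N powr (- p) \<le> EZ K Q \<mu> f N \<beta> h"
  proof (rule eventually_mono[OF eventually_ge_at_top[of 1]])
    fix N :: nat assume "N \<ge> 1"
    then have "rew_min \<beta> h * (c * real N powr (- p)) \<le> rew_min \<beta> h * K N"
      using K_lower rew_min_pos[of \<beta> h] by (intro mult_left_mono) auto
    then show "c * rew_min \<beta> h * exp (0 * real N) * real N powr (- p) \<le> EZ K Q \<mu> f N \<beta> h"
      using EZ_ge_K[OF \<open>N \<ge> 1\<close>, of \<beta> h] by (simp add: mult_ac)
  qed
  moreover have "\<forall>\<^sub>F N in sequentially.
      EZ K Q \<mu> f N \<beta> h \<le> exp (0 * real N) * (E.mu_v / (lam K Q f 0 \<beta> h * E.v_min))"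
    using E.EZ_upper assms(1) by simp
  moreover have "c * rew_min \<beta> h > 0" using \<open>c > 0\<close> rew_min_pos by simp
  ultimately have "(\<lambda>N. ln (EZ K Q \<mu> f N \<beta> h) / real N) \<longlonglongrightarrow> 0"
    by (rule ln_over_n_tendsto)
  moreover have "Fa K Q f \<beta> h = 0" using Fa_eq_0_iff assms(1) by simp
  ultimately show ?thesis by simp
qed

end

lemma regularly_varying_kernel_lower_bound:
  fixes K L :: "nat \<Rightarrow> real"
  assumes "\<forall>n. L n > 0" "slowly_varying L" and K: "\<forall>n\<ge>1. K n = L n * real n powr (- p)"
  obtains a where "a > 0" "\<And>n. n \<ge> 1 \<Longrightarrow> a * real n powr (- (p + 1)) \<le> K n"
proof -
  obtain a where a: "a > 0" "\<And>n. n \<ge> 1 \<Longrightarrow> a / real n \<le> L n"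
    using slowly_varying_ge_inverse[OF assms(1,2)] by blast
  have "a * real n powr (- (p + 1)) \<le> K n" if n: "n \<ge> 1" for n
  proof -
    have "a * real n powr (- (p + 1)) = a / real n * real n powr (- p)"
      using n by (simp add: powr_diff powr_minus divide_inverse)
    also have "\<dots> \<le> L n * real n powr (- p)" using a(2)[OF n] by (rule mult_right_mono) simp
    finally show ?thesis using K n by simp
  qed
  then show ?thesis using that a(1) by blast
qed

theorem mainTheorem1:
  fixes K L :: "nat \<Rightarrow> real" and \<alpha> :: real
    and Q :: "'x::finite \<Rightarrow> 'x \<Rightarrow> real" and \<mu>0 f :: "'x \<Rightarrow> real"
  assumes alpha: "\<alpha> \<ge> 0"
    and Lpos: "\<forall>n. L n > 0" and Lsv: "slowly_varying L"
    and Kdef: "\<forall>n\<ge>1. K n = L n * real n powr (-(1 + \<alpha>))"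
    and Ksum: "(\<lambda>n. K (Suc n)) sums 1"
    and Qst: "stochastic_matrix Q" and Qirr: "irreducible_matrix Q"
    and mu: "invariant_distribution Q \<mu>0"
    and fmean: "(\<Sum>x\<in>UNIV. \<mu>0 x * f x) = 0"
  shows "(\<forall>\<beta> h. \<beta> \<ge> 0 \<longrightarrow>
            (lam K Q f 0 \<beta> h > 1 \<longrightarrow> (\<exists>!b. b > 0 \<and> lam K Q f b \<beta> h = 1)) \<and>
            ((\<lambda>N. ln (EZ K Q \<mu>0 f N \<beta> h) / real N) \<longlonglongrightarrow> Fa K Q f \<beta> h) \<and>
            Fa K Q f \<beta> h \<ge> 0)
       \<and> (\<forall>\<beta>. \<beta> \<ge> 0 \<longrightarrow> Sup {h. Fa K Q f \<beta> h = 0} = - ln (lam K Q f 0 \<beta> 0))"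
proof -
  interpret annealed_pinning K Q \<mu>0 f
    by unfold_locales (use Kdef Lpos Ksum Qst Qirr mu in auto)
  obtain a where a: "a > 0" "\<And>n. n \<ge> 1 \<Longrightarrow> a * real n powr (- ((1 + \<alpha>) + 1)) \<le> K n"
    using regularly_varying_kernel_lower_bound[OF Lpos Lsv Kdef] by blast
  have "(\<lambda>N. ln (EZ K Q \<mu>0 f N \<beta> h) / real N) \<longlonglongrightarrow> Fa K Q f \<beta> h" for \<beta> h
    using free_energy_localized free_energy_delocalized[OF _ a] by (cases "lam K Q f 0 \<beta> h > 1") auto
  then show ?thesis using lam_eq_1_unique Fa_nonneg Sup_Fa_eq_0 by blast
qed

end
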